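(* Work on $\mathbb{R}^d$ with coordinates $x^\mu$ and smooth fields (non-singular at $x=0$). The map $\omega\mapsto R$, $R^a_{\ b}=d\omega^a_{\ b}+\omega^a_{\ c}\wedge\omega^c_{\ b}$, with inverse $\omega^a_{\ b\mu}(x)=\int_0^1 t\,x^\nu R^a_{\ b\nu\mu}(tx)\,dt$, is a bijection between: (i) the space of curvature 2-forms $R^a_{\ b}$ satisfying the 1st Bianchi identity for curvature $$R^a_{\ b}\wedge e^b=0,\qquad e^a_\mu(x)=\delta^a_\mu+\int_0^1 t(1-t)\,x^b x^\nu R^a_{\ b\nu\mu}(tx)\,dt,$$ and the 2nd Bianchi identity for curvature $$dR^a_{\ b}+\omega^a_{\ c}\wedge R^c_{\ b}-R^a_{\ c}\wedge\omega^c_{\ b}=0,\qquad \omega^a_{\ b\mu}(x)=\int_0^1 t\,x^\nu R^a_{\ b\nu\mu}(tx)\,dt;$$ (ii) the space of spin-connections $\omega^a_{\ b}$ satisfying the Fock–Schwinger gauge condition $i_{\mathfrak r}\omega^a_{\ b}=0$ (i.e. $x^\mu\omega^a_{\ b\mu}(x)=0$) and the torsionless condition $$de^a+\omega^a_{\ b}\wedge e^b=0,\qquad\text{where } e^a_\mu(x)=\delta^a_\mu+\int_0^1 \omega^a_{\ b\mu}(tx)\,t\,x^b\,dt.$$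
   Context: Latin indices $a,b,c\in\{1,\dots,d\}$ are frame indices, Greek indices coordinate indices; frame indices are raised/lowered with $\delta_{ab}$, repeated indices summed, and $x^a=\delta^a_\mu x^\mu$. Curvature 2-forms $R^a_{\ b}=\tfrac12R^a_{\ b\mu\nu}dx^\mu\wedge dx^\nu$ and spin-connections $\omega^a_{\ b}=\omega^a_{\ b\mu}dx^\mu$ are $\mathfrak{so}(d)$-valued (antisymmetric in $a,b$). $e^a=e^a_\mu dx^\mu$. $\mathfrak r=x^\mu\partial_\mu$ is the radial vector field and $i_X$ the interior product, $(i_X\omega)_{\mu_2\dots\mu_p}=X^{\mu_1}\omega_{\mu_1\dots\mu_p}$. Conventions: $(d\omega)_{\mu_1\dots\mu_{p+1}}=(p+1)\partial_{[\mu_1}\omega_{\mu_2\dots\mu_{p+1}]}$, $(\omega\wedge\sigma)_{\mu_1\dots\mu_{p+q}}=\frac{(p+q)!}{p!q!}\omega_{[\mu_1\dots\mu_p}\sigma_{\mu_{p+1}\dots\mu_{p+q}]}$. *)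

theory Defs
  imports "HOL-Analysis.Analysis"
begin

text \<open>Frame and coordinate indices both range over a finite type 'n, d = CARD('n);
points of R^d are vectors real^'n, with x^a = x $ a.\<close>

definition pd :: "'n::finite \<Rightarrow> (real^'n \<Rightarrow> real) \<Rightarrow> real^'n \<Rightarrow> real" where
  "pd \<mu> f x = deriv (\<lambda>t. f (x + t *\<^sub>R axis \<mu> 1)) 0"

fun iter_pd :: "'n::finite list \<Rightarrow> (real^'n \<Rightarrow> real) \<Rightarrow> real^'n \<Rightarrow> real" where
  "iter_pd [] f = f"
| "iter_pd (\<mu> # \<mu>s) f = pd \<mu> (iter_pd \<mu>s f)"

definition smooth_fn :: "(real^'n::finite \<Rightarrow> real) \<Rightarrow> bool" where
  "smooth_fn f \<longleftrightarrow> (\<forall>\<mu>s. continuous_on UNIV (iter_pd \<mu>s f) \<and>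
      (\<forall>\<mu> x. (\<lambda>t. iter_pd \<mu>s f (x + t *\<^sub>R axis \<mu> 1)) differentiable (at 0)))"

text \<open>Component formulas for d and wedge, following the stated conventions.
 1-forms: w \<mu> x; 2-forms: F \<mu> \<nu> x.\<close>
definition dform1 :: "('n::finite \<Rightarrow> real^'n \<Rightarrow> real) \<Rightarrow> 'n \<Rightarrow> 'n \<Rightarrow> real^'n \<Rightarrow> real" where
  "dform1 w \<mu> \<nu> x = pd \<mu> (w \<nu>) x - pd \<nu> (w \<mu>) x"

definition wedge11 :: "('n::finite \<Rightarrow> real^'n \<Rightarrow> real) \<Rightarrow> ('n \<Rightarrow> real^'n \<Rightarrow> real) \<Rightarrow> 'n \<Rightarrow> 'n \<Rightarrow> real^'n \<Rightarrow> real" where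
  "wedge11 w s \<mu> \<nu> x = w \<mu> x * s \<nu> x - w \<nu> x * s \<mu> x"

text \<open>(d F)_{\<mu>\<nu>\<rho>} = 3 \<partial>_[\<mu> F_{\<nu>\<rho>]} (full antisymmetrisation).\<close>
definition dform2 :: "('n::finite \<Rightarrow> 'n \<Rightarrow> real^'n \<Rightarrow> real) \<Rightarrow> 'n \<Rightarrow> 'n \<Rightarrow> 'n \<Rightarrow> real^'n \<Rightarrow> real" where
  "dform2 F \<mu> \<nu> \<rho> x = (1/2) *
     (pd \<mu> (F \<nu> \<rho>) x - pd \<mu> (F \<rho> \<nu>) x + pd \<nu> (F \<rho> \<mu>) x - pd \<nu> (F \<mu> \<rho>) x
      + pd \<rho> (F \<mu> \<nu>) x - pd \<rho> (F \<nu> \<mu>) x)"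

text \<open>(F \<and> w)_{\<mu>\<nu>\<rho>} = 3 F_[\<mu>\<nu> w_\<rho>].\<close>
definition wedge21 :: "('n::finite \<Rightarrow> 'n \<Rightarrow> real^'n \<Rightarrow> real) \<Rightarrow> ('n \<Rightarrow> real^'n \<Rightarrow> real) \<Rightarrow> 'n \<Rightarrow> 'n \<Rightarrow> 'n \<Rightarrow> real^'n \<Rightarrow> real" where
  "wedge21 F w \<mu> \<nu> \<rho> x = (1/2) *
     (F \<mu> \<nu> x * w \<rho> x - F \<nu> \<mu> x * w \<rho> x + F \<nu> \<rho> x * w \<mu> x - F \<rho> \<nu> x * w \<mu> x
      + F \<rho> \<mu> x * w \<nu> x - F \<mu> \<rho> x * w \<nu> x)"

text \<open>(w \<and> F)_{\<mu>\<nu>\<rho>} = 3 w_[\<mu> F_\<nu>\<rho>].\<close>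
definition wedge12 :: "('n::finite \<Rightarrow> real^'n \<Rightarrow> real) \<Rightarrow> ('n \<Rightarrow> 'n \<Rightarrow> real^'n \<Rightarrow> real) \<Rightarrow> 'n \<Rightarrow> 'n \<Rightarrow> 'n \<Rightarrow> real^'n \<Rightarrow> real" where
  "wedge12 w F \<mu> \<nu> \<rho> x = (1/2) *
     (w \<mu> x * F \<nu> \<rho> x - w \<mu> x * F \<rho> \<nu> x + w \<nu> x * F \<rho> \<mu> x - w \<nu> x * F \<mu> \<rho> x
      + w \<rho> x * F \<mu> \<nu> x - w \<rho> x * F \<nu> \<mu> x)"

text \<open>Curvature components R a b \<mu> \<nu> x = R^a_{b\<mu>\<nu>}(x); connection components
 \<omega> a b \<mu> x = \<omega>^a_{b\<mu>}(x).\<close>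
type_synonym 'n curvature = "'n \<Rightarrow> 'n \<Rightarrow> 'n \<Rightarrow> 'n \<Rightarrow> real^'n \<Rightarrow> real"
type_synonym 'n connection = "'n \<Rightarrow> 'n \<Rightarrow> 'n \<Rightarrow> real^'n \<Rightarrow> real"

definition curv :: "'n::finite connection \<Rightarrow> 'n curvature" where
  "curv \<omega> a b \<mu> \<nu> x = dform1 (\<omega> a b) \<mu> \<nu> x + (\<Sum>c\<in>UNIV. wedge11 (\<omega> a c) (\<omega> c b) \<mu> \<nu> x)"

definition conn_of :: "'n::finite curvature \<Rightarrow> 'n connection" where
  "conn_of R a b \<mu> x = integral {0..1} (\<lambda>t. t * (\<Sum>\<nu>\<in>UNIV. x $ \<nu> * R a b \<nu> \<mu> (t *\<^sub>R x)))"

definition vielbein_R :: "'n::finite curvature \<Rightarrow> 'n \<Rightarrow> 'n \<Rightarrow> real^'n \<Rightarrow> real" where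
  "vielbein_R R a \<mu> x = (if a = \<mu> then 1 else 0) +
     integral {0..1} (\<lambda>t. t * (1 - t) * (\<Sum>b\<in>UNIV. \<Sum>\<nu>\<in>UNIV. x $ b * x $ \<nu> * R a b \<nu> \<mu> (t *\<^sub>R x)))"

definition vielbein_w :: "'n::finite connection \<Rightarrow> 'n \<Rightarrow> 'n \<Rightarrow> real^'n \<Rightarrow> real" where
  "vielbein_w \<omega> a \<mu> x = (if a = \<mu> then 1 else 0) +
     integral {0..1} (\<lambda>t. \<Sum>b\<in>UNIV. \<omega> a b \<mu> (t *\<^sub>R x) * t * x $ b)"

text \<open>Space (i): smooth so(d)-valued 2-forms satisfying both Bianchi identities.\<close>
definition curv_space :: "'n::finite curvature set" where
  "curv_space = {R.
     (\<forall>a b \<mu> \<nu>. smooth_fn (R a b \<mu> \<nu>)) \<and>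
     (\<forall>a b \<mu> \<nu> x. R a b \<mu> \<nu> x = - R b a \<mu> \<nu> x) \<and>
     (\<forall>a b \<mu> \<nu> x. R a b \<mu> \<nu> x = - R a b \<nu> \<mu> x) \<and>
     (\<forall>a \<mu> \<nu> \<rho> x. (\<Sum>b\<in>UNIV. wedge21 (R a b) (vielbein_R R b) \<mu> \<nu> \<rho> x) = 0) \<and>
     (\<forall>a b \<mu> \<nu> \<rho> x. dform2 (R a b) \<mu> \<nu> \<rho> x
         + (\<Sum>c\<in>UNIV. wedge12 (conn_of R a c) (R c b) \<mu> \<nu> \<rho> x)
         - (\<Sum>c\<in>UNIV. wedge21 (R a c) (conn_of R c b) \<mu> \<nu> \<rho> x) = 0)}"

text \<open>Space (ii): smooth so(d)-valued connections in Fock-Schwinger gauge, torsionless.\<close>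
definition conn_space :: "'n::finite connection set" where
  "conn_space = {\<omega>.
     (\<forall>a b \<mu>. smooth_fn (\<omega> a b \<mu>)) \<and>
     (\<forall>a b \<mu> x. \<omega> a b \<mu> x = - \<omega> b a \<mu> x) \<and>
     (\<forall>a b x. (\<Sum>\<mu>\<in>UNIV. x $ \<mu> * \<omega> a b \<mu> x) = 0) \<and>
     (\<forall>a \<mu> \<nu> x. dform1 (vielbein_w \<omega> a) \<mu> \<nu> x
         + (\<Sum>b\<in>UNIV. wedge11 (\<omega> a b) (vielbein_w \<omega> b) \<mu> \<nu> x) = 0)}"

end

theory Submission
  imports Defs
begin

(* Everything rests on the Euler operator E_k f = k f + x^mu d_mu f (euler_op), which is injective
   on smooth functions for k > 0 because d/dl (l^k f(l x)) = l^(k-1) (E_k f)(l x).  The inverse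
   formula omega = int_0^1 t i_x R(t x) dt solves E_1 omega = i_x R, while a connection in
   Fock-Schwinger gauge satisfies E_1 omega = i_x (d omega + omega ^ omega); hence conn_of inverts
   curv on the space (ii).  Conversely, for R in the space (i), both the 2-form
   D = R - curv (conn_of R) and the torsion of the vielbein satisfy i_x F = 0 and, by the second
   resp. the first Bianchi identity, i_x dF = 0; by Cartan's formula this says E_2 F = 0, so F = 0.
   The two vielbein formulas agree because both deviations from delta solve E_1 u^a = omega^a_b x^b. *)

lemma pd_eqI:
  assumes "((\<lambda>s. f (x + s *\<^sub>R axis \<mu> 1)) has_real_derivative D) (at 0)"
  shows "pd \<mu> f x = D"
  using assms unfolding pd_def by (rule DERIV_imp_deriv)

lemma has_real_derivative_pd:
  assumes "(\<lambda>s. f (x + s *\<^sub>R axis \<mu> 1)) differentiable (at 0)"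
  shows "((\<lambda>s. f (x + s *\<^sub>R axis \<mu> 1)) has_real_derivative pd \<mu> f x) (at 0)"
  using assms unfolding pd_def by (simp add: DERIV_deriv_iff_real_differentiable)

lemma has_real_derivative_pd_line:
  assumes "\<And>y. (\<lambda>s. f (y + s *\<^sub>R axis \<mu> 1)) differentiable (at 0)"
  shows "((\<lambda>s. f (x + s *\<^sub>R axis \<mu> 1)) has_real_derivative pd \<mu> f (x + s0 *\<^sub>R axis \<mu> 1)) (at s0)"
proof -
  have "((\<lambda>s. f ((x + s0 *\<^sub>R axis \<mu> 1) + s *\<^sub>R axis \<mu> 1)) has_real_derivative
      pd \<mu> f (x + s0 *\<^sub>R axis \<mu> 1)) (at 0)"
    by (rule has_real_derivative_pd[OF assms])
  then have "((\<lambda>s. f (x + (s + s0) *\<^sub>R axis \<mu> 1)) has_real_derivative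
      pd \<mu> f (x + s0 *\<^sub>R axis \<mu> 1)) (at 0)"
    by (simp add: algebra_simps scaleR_add_left)
  then show ?thesis
    using DERIV_shift[where f="\<lambda>s. f (x + s *\<^sub>R axis \<mu> 1)" and x=0 and z=s0] by simp
qed

lemma pd_add:
  assumes "(\<lambda>s. f (x + s *\<^sub>R axis \<mu> 1)) differentiable (at 0)"
    and "(\<lambda>s. g (x + s *\<^sub>R axis \<mu> 1)) differentiable (at 0)"
  shows "pd \<mu> (\<lambda>y. f y + g y) x = pd \<mu> f x + pd \<mu> g x"
  by (rule pd_eqI, rule DERIV_add[OF has_real_derivative_pd[OF assms(1)] has_real_derivative_pd[OF assms(2)]])

lemma pd_diff:
  assumes "(\<lambda>s. f (x + s *\<^sub>R axis \<mu> 1)) differentiable (at 0)"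
    and "(\<lambda>s. g (x + s *\<^sub>R axis \<mu> 1)) differentiable (at 0)"
  shows "pd \<mu> (\<lambda>y. f y - g y) x = pd \<mu> f x - pd \<mu> g x"
  by (rule pd_eqI, rule DERIV_diff[OF has_real_derivative_pd[OF assms(1)] has_real_derivative_pd[OF assms(2)]])

lemma pd_minus:
  assumes "(\<lambda>s. f (x + s *\<^sub>R axis \<mu> 1)) differentiable (at 0)"
  shows "pd \<mu> (\<lambda>y. - f y) x = - pd \<mu> f x"
  by (rule pd_eqI, rule DERIV_minus[OF has_real_derivative_pd[OF assms]])

lemma pd_mult:
  assumes "(\<lambda>s. f (x + s *\<^sub>R axis \<mu> 1)) differentiable (at 0)"
    and "(\<lambda>s. g (x + s *\<^sub>R axis \<mu> 1)) differentiable (at 0)"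
  shows "pd \<mu> (\<lambda>y. f y * g y) x = pd \<mu> f x * g x + f x * pd \<mu> g x"
proof -
  have "((\<lambda>s. f (x + s *\<^sub>R axis \<mu> 1) * g (x + s *\<^sub>R axis \<mu> 1)) has_real_derivative
     pd \<mu> f x * g (x + 0 *\<^sub>R axis \<mu> 1) + pd \<mu> g x * f (x + 0 *\<^sub>R axis \<mu> 1)) (at 0)"
    by (rule DERIV_mult[OF has_real_derivative_pd[OF assms(1)] has_real_derivative_pd[OF assms(2)]])
  then show ?thesis by (intro pd_eqI) (simp add: algebra_simps)
qed

lemma pd_sum:
  assumes "finite A" and "\<And>i. i \<in> A \<Longrightarrow> (\<lambda>s. f i (x + s *\<^sub>R axis \<mu> 1)) differentiable (at 0)"
  shows "pd \<mu> (\<lambda>y. \<Sum>i\<in>A. f i y) x = (\<Sum>i\<in>A. pd \<mu> (f i) x)"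
  by (rule pd_eqI, rule DERIV_sum) (use assms has_real_derivative_pd in auto)

lemma pd_const: "pd \<mu> (\<lambda>y. c) x = 0"
  by (rule pd_eqI) simp

lemma pd_coord: "pd \<mu> (\<lambda>y. y $ \<nu>) x = (if \<mu> = \<nu> then 1 else 0)"
proof (rule pd_eqI)
  have "(\<lambda>s. (x + s *\<^sub>R axis \<mu> 1) $ \<nu>) = (\<lambda>s. x $ \<nu> + s * (if \<mu> = \<nu> then 1 else 0))"
    by (auto simp: axis_def)
  moreover have "((\<lambda>s. x $ \<nu> + s * (if \<mu> = \<nu> then 1 else 0)) has_real_derivative
      (if \<mu> = \<nu> then 1 else 0)) (at 0)"
    by (auto intro!: derivative_eq_intros)
  ultimately show "((\<lambda>s. (x + s *\<^sub>R axis \<mu> 1) $ \<nu>) has_real_derivative (if \<mu> = \<nu> then 1 else 0)) (at 0)"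
    by simp
qed

lemma differentiable_coord_line: "(\<lambda>s. (x + s *\<^sub>R axis \<mu> 1) $ \<nu>) differentiable (at 0)"
  by (auto simp: axis_def intro!: derivative_intros)

lemma has_real_derivative_scaleR_line:
  fixes f :: "real^'n::finite \<Rightarrow> real"
  assumes "\<And>y. (\<lambda>s. f (y + s *\<^sub>R axis \<mu> 1)) differentiable (at 0)"
  shows "((\<lambda>s. f (t *\<^sub>R (x + s *\<^sub>R axis \<mu> 1))) has_real_derivative t * pd \<mu> f (t *\<^sub>R x)) (at 0)"
proof -
  have "((\<lambda>s. f (t *\<^sub>R x + s *\<^sub>R axis \<mu> 1)) has_real_derivative
      pd \<mu> f (t *\<^sub>R x + (t * 0) *\<^sub>R axis \<mu> 1)) (at (t * 0))"
    by (rule has_real_derivative_pd_line[OF assms])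
  moreover have "((\<lambda>s. t * s) has_real_derivative t) (at 0)"
    by (auto intro!: derivative_eq_intros)
  ultimately have "((\<lambda>s. f (t *\<^sub>R x + (t * s) *\<^sub>R axis \<mu> 1)) has_real_derivative
      pd \<mu> f (t *\<^sub>R x + (t * 0) *\<^sub>R axis \<mu> 1) * t) (at 0)"
    by (rule DERIV_chain2)
  then show ?thesis by (simp add: scaleR_add_right mult.commute)
qed

lemma pd_scaleR:
  fixes f :: "real^'n::finite \<Rightarrow> real"
  assumes "\<And>y. (\<lambda>s. f (y + s *\<^sub>R axis \<mu> 1)) differentiable (at 0)"
  shows "pd \<mu> (\<lambda>y. f (t *\<^sub>R y)) x = t * pd \<mu> f (t *\<^sub>R x)"
  by (rule pd_eqI) (rule has_real_derivative_scaleR_line[OF assms])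

lemma differentiable_scaleR_line:
  fixes f :: "real^'n::finite \<Rightarrow> real"
  assumes "\<And>y. (\<lambda>s. f (y + s *\<^sub>R axis \<mu> 1)) differentiable (at 0)"
  shows "(\<lambda>s. f (t *\<^sub>R (x + s *\<^sub>R axis \<mu> 1))) differentiable (at 0)"
  using has_real_derivative_scaleR_line[OF assms] real_differentiable_def by blast

text \<open>\<open>Ck_family k H\<close> says that the partial derivatives of order at most \<open>k\<close> of \<open>H t\<close> exist
  and are jointly continuous in \<open>(t, x) \<in> [0,1] \<times> \<real>\<^sup>d\<close>: exactly what is needed to differentiate
  \<open>\<integral>\<^sub>0\<^sup>1 H t x dt\<close> under the integral sign \<open>k\<close> times.\<close>

fun Ck_family :: "nat \<Rightarrow> (real \<Rightarrow> real^'n::finite \<Rightarrow> real) \<Rightarrow> bool" where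
  "Ck_family 0 H \<longleftrightarrow> continuous_on ({0..1} \<times> UNIV) (\<lambda>p. H (fst p) (snd p)) \<and>
      (\<forall>\<mu> x t. t \<in> {0..1} \<longrightarrow> (\<lambda>s. H t (x + s *\<^sub>R axis \<mu> 1)) differentiable (at 0))"
| "Ck_family (Suc k) H \<longleftrightarrow> Ck_family 0 H \<and> (\<forall>\<mu>. Ck_family k (\<lambda>t. pd \<mu> (H t)))"

lemma iter_pd_snoc: "iter_pd (\<mu>s @ [\<mu>]) f = iter_pd \<mu>s (pd \<mu> f)"
  by (induction \<mu>s) auto

lemma Ck_family_iff_iter_pd:
  "Ck_family k H \<longleftrightarrow> (\<forall>\<mu>s. length \<mu>s \<le> k \<longrightarrow> Ck_family 0 (\<lambda>t. iter_pd \<mu>s (H t)))"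
proof (induction k arbitrary: H)
  case 0
  then show ?case by auto
next
  case (Suc k)
  show ?case
  proof
    assume H: "Ck_family (Suc k) H"
    show "\<forall>\<mu>s. length \<mu>s \<le> Suc k \<longrightarrow> Ck_family 0 (\<lambda>t. iter_pd \<mu>s (H t))"
    proof (intro allI impI)
      fix \<mu>s :: "'a list" assume len: "length \<mu>s \<le> Suc k"
      show "Ck_family 0 (\<lambda>t. iter_pd \<mu>s (H t))"
      proof (cases \<mu>s rule: rev_exhaust)
        case Nil
        then show ?thesis using H by simp
      next
        case (snoc \<nu>s \<nu>)
        have "Ck_family k (\<lambda>t. pd \<nu> (H t))" using H by simp
        then show ?thesis using Suc.IH[of "\<lambda>t. pd \<nu> (H t)"] len snoc by (simp add: iter_pd_snoc)
      qed
    qed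
  next
    assume iter: "\<forall>\<mu>s. length \<mu>s \<le> Suc k \<longrightarrow> Ck_family 0 (\<lambda>t. iter_pd \<mu>s (H t))"
    have "Ck_family 0 H" using iter[rule_format, of "[]"] by simp
    moreover have "Ck_family k (\<lambda>t. pd \<mu> (H t))" for \<mu>
      unfolding Suc.IH
    proof (intro allI impI)
      fix \<mu>s :: "'a list" assume "length \<mu>s \<le> k"
      then show "Ck_family 0 (\<lambda>t. iter_pd \<mu>s (pd \<mu> (H t)))"
        using iter[rule_format, of "\<mu>s @ [\<mu>]"] by (simp add: iter_pd_snoc)
    qed
    ultimately show "Ck_family (Suc k) H" by simp
  qed
qed

lemma Ck_family_0_const_iff:
  fixes g :: "real^'n::finite \<Rightarrow> real"
  shows "Ck_family 0 (\<lambda>_. g) \<longleftrightarrow>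
    continuous_on UNIV g \<and> (\<forall>\<mu> x. (\<lambda>s. g (x + s *\<^sub>R axis \<mu> 1)) differentiable (at 0))"
proof -
  have "continuous_on ({0..1::real} \<times> UNIV) (\<lambda>p. g (snd p)) \<longleftrightarrow> continuous_on UNIV g"
  proof
    assume cont: "continuous_on ({0..1::real} \<times> UNIV) (\<lambda>p. g (snd p))"
    have "continuous_on UNIV ((\<lambda>p. g (snd p)) \<circ> (\<lambda>x::real^'n. (0::real, x)))"
      by (rule continuous_on_compose, intro continuous_intros, rule continuous_on_subset[OF cont]) auto
    then show "continuous_on UNIV g" by (simp add: o_def)
  next
    assume "continuous_on UNIV g"
    then show "continuous_on ({0..1::real} \<times> UNIV) (\<lambda>p. g (snd p))"
      by (intro continuous_on_compose2[where g=g and f=snd]) (auto intro: continuous_intros)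
  qed
  then show ?thesis by auto
qed

lemma smooth_fn_iff_Ck_family: "smooth_fn f \<longleftrightarrow> (\<forall>k. Ck_family k (\<lambda>_. f))"
proof
  assume "smooth_fn f"
  then have "Ck_family 0 (\<lambda>_. iter_pd \<mu>s f)" for \<mu>s
    unfolding Ck_family_0_const_iff smooth_fn_def by simp
  then show "\<forall>k. Ck_family k (\<lambda>_. f)" using Ck_family_iff_iter_pd by blast
next
  assume all: "\<forall>k. Ck_family k (\<lambda>_. f)"
  have "Ck_family 0 (\<lambda>_. iter_pd \<mu>s f)" for \<mu>s
  proof -
    have "Ck_family (length \<mu>s) (\<lambda>_. f)" using all by simp
    then show ?thesis unfolding Ck_family_iff_iter_pd[of "length \<mu>s"] by simp
  qed
  then show "smooth_fn f" unfolding Ck_family_0_const_iff smooth_fn_def by simp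
qed

lemma Ck_family_0_cong:
  "Ck_family 0 H \<Longrightarrow> (\<And>t. t \<in> {0..1} \<Longrightarrow> H t = H' t) \<Longrightarrow> Ck_family 0 H'"
proof -
  assume H: "Ck_family 0 H" and eq: "\<And>t. t \<in> {0..1} \<Longrightarrow> H t = H' t"
  have "continuous_on ({0..1} \<times> UNIV) (\<lambda>p. H' (fst p) (snd p)) =
      continuous_on ({0..1} \<times> UNIV) (\<lambda>p. H (fst p) (snd p))"
    by (rule continuous_on_cong) (auto simp: mem_Times_iff eq)
  then show "Ck_family 0 H'" using H eq by simp
qed

lemma Ck_family_cong:
  "Ck_family k H \<Longrightarrow> (\<And>t. t \<in> {0..1} \<Longrightarrow> H t = H' t) \<Longrightarrow> Ck_family k H'"
proof (induction k arbitrary: H H')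
  case 0
  then show ?case using Ck_family_0_cong by blast
next
  case (Suc k)
  then have "Ck_family 0 H'" using Ck_family_0_cong[of H H'] by simp
  moreover have "Ck_family k (\<lambda>t. pd \<mu> (H' t))" for \<mu>
    using Suc.IH[of "\<lambda>t. pd \<mu> (H t)" "\<lambda>t. pd \<mu> (H' t)"] Suc.prems by simp
  ultimately show ?case by simp
qed

lemma Ck_family_Suc_iff:
  "Ck_family (Suc k) H \<longleftrightarrow> Ck_family 0 H \<and> (\<forall>\<mu>. Ck_family k (\<lambda>t. pd \<mu> (H t)))"
  by simp

declare Ck_family.simps(2)[simp del]

lemma Ck_family_Suc_imp: "Ck_family (Suc k) H \<Longrightarrow> Ck_family k H"
proof (induction k arbitrary: H)
  case 0
  then show ?case unfolding Ck_family_Suc_iff by blast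
next
  case (Suc k)
  then have "Ck_family 0 H" "Ck_family (Suc k) (\<lambda>t. pd \<mu> (H t))" for \<mu>
    unfolding Ck_family_Suc_iff[of "Suc k"] by blast+
  then show ?case using Suc.IH unfolding Ck_family_Suc_iff[of k] by blast
qed

lemma Ck_family_imp_0:
  assumes "Ck_family k H"
  shows "Ck_family 0 H"
proof (cases k)
  case (Suc n)
  then show ?thesis using assms unfolding Suc Ck_family_Suc_iff by blast
qed (use assms in simp)

lemma Ck_family_differentiableD:
  "Ck_family k H \<Longrightarrow> t \<in> {0..1} \<Longrightarrow> (\<lambda>s. H t (x + s *\<^sub>R axis \<mu> 1)) differentiable (at 0)"
  using Ck_family_imp_0[of k H] by auto

lemma Ck_family_continuousD:
  "Ck_family k H \<Longrightarrow> continuous_on ({0..1} \<times> UNIV) (\<lambda>p. H (fst p) (snd p))"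
  using Ck_family_imp_0[of k H] by auto

lemma Ck_family_pd: "Ck_family (Suc k) H \<Longrightarrow> Ck_family k (\<lambda>t. pd \<mu> (H t))"
  unfolding Ck_family_Suc_iff by blast

lemma Ck_family_add: "Ck_family k H \<Longrightarrow> Ck_family k G \<Longrightarrow> Ck_family k (\<lambda>t x. H t x + G t x)"
proof (induction k arbitrary: H G)
  case 0
  then show ?case by (auto intro!: continuous_intros)
next
  case (Suc k)
  have "Ck_family 0 (\<lambda>t x. H t x + G t x)"
    using Ck_family_imp_0[OF Suc.prems(1)] Ck_family_imp_0[OF Suc.prems(2)]
    by (auto intro!: continuous_intros)
  moreover have "Ck_family k (\<lambda>t. pd \<mu> (\<lambda>x. H t x + G t x))" for \<mu>
  proof (rule Ck_family_cong)
    show "Ck_family k (\<lambda>t x. pd \<mu> (H t) x + pd \<mu> (G t) x)"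
      using Suc.IH Ck_family_pd Suc.prems by blast
    show "(\<lambda>x. pd \<mu> (H t) x + pd \<mu> (G t) x) = pd \<mu> (\<lambda>x. H t x + G t x)" if "t \<in> {0..1}" for t
      using that Suc.prems by (auto intro!: pd_add[symmetric] Ck_family_differentiableD)
  qed
  ultimately show ?case unfolding Ck_family_Suc_iff by blast
qed

lemma Ck_family_mult: "Ck_family k H \<Longrightarrow> Ck_family k G \<Longrightarrow> Ck_family k (\<lambda>t x. H t x * G t x)"
proof (induction k arbitrary: H G)
  case 0
  then show ?case by (auto intro!: continuous_intros)
next
  case (Suc k)
  have "Ck_family 0 (\<lambda>t x. H t x * G t x)"
    using Ck_family_imp_0[OF Suc.prems(1)] Ck_family_imp_0[OF Suc.prems(2)]
    by (auto intro!: continuous_intros)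
  moreover have "Ck_family k (\<lambda>t. pd \<mu> (\<lambda>x. H t x * G t x))" for \<mu>
  proof (rule Ck_family_cong)
    have "Ck_family k (\<lambda>t x. pd \<mu> (H t) x * G t x)" "Ck_family k (\<lambda>t x. H t x * pd \<mu> (G t) x)"
      using Suc.IH Ck_family_pd Ck_family_Suc_imp Suc.prems by blast+
    then show "Ck_family k (\<lambda>t x. pd \<mu> (H t) x * G t x + H t x * pd \<mu> (G t) x)"
      by (rule Ck_family_add)
    show "(\<lambda>x. pd \<mu> (H t) x * G t x + H t x * pd \<mu> (G t) x) = pd \<mu> (\<lambda>x. H t x * G t x)"
      if "t \<in> {0..1}" for t
      using that Suc.prems by (auto intro!: pd_mult[symmetric] Ck_family_differentiableD)
  qed
  ultimately show ?case unfolding Ck_family_Suc_iff by blast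
qed

lemma Ck_family_const:
  fixes g :: "real \<Rightarrow> real"
  shows "continuous_on {0..1} g \<Longrightarrow> Ck_family k (\<lambda>t (x::real^'n::finite). g t)"
proof (induction k arbitrary: g)
  case 0
  then show ?case
    by (auto intro!: continuous_on_compose2[where g=g and f=fst] continuous_intros)
next
  case (Suc k)
  have "Ck_family k (\<lambda>t (x::real^'n). 0::real)"
    using Suc.IH[of "\<lambda>_. 0"] by auto
  moreover have "(\<lambda>t. pd \<mu> (\<lambda>x::real^'n. g t)) = (\<lambda>t x. 0)" for \<mu>
    by (simp add: pd_const fun_eq_iff)
  ultimately have "Ck_family k (\<lambda>t. pd \<mu> (\<lambda>x::real^'n. g t))" for \<mu>
    by simp
  moreover have "Ck_family 0 (\<lambda>t (x::real^'n). g t)"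
    using Suc.prems by (auto intro!: continuous_on_compose2[where g=g and f=fst] continuous_intros)
  ultimately show ?case unfolding Ck_family_Suc_iff by blast
qed

lemma Ck_family_sum:
  "finite A \<Longrightarrow> (\<And>i. i \<in> A \<Longrightarrow> Ck_family k (H i)) \<Longrightarrow> Ck_family k (\<lambda>t x. \<Sum>i\<in>A. H i t x)"
proof (induction A rule: finite_induct)
  case empty
  then show ?case using Ck_family_const[of "\<lambda>_. 0" k] by auto
next
  case (insert a A)
  then show ?case using Ck_family_add[of k "H a" "\<lambda>t x. \<Sum>i\<in>A. H i t x"] by auto
qed

lemma Ck_family_coord: "Ck_family k (\<lambda>t (x::real^'n::finite). x $ \<nu>)"
proof (induction k)
  case 0
  then show ?case by (auto intro!: continuous_intros differentiable_coord_line)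
next
  case (Suc k)
  have "Ck_family k (\<lambda>t. pd \<mu> (\<lambda>x::real^'n. x $ \<nu>))" for \<mu>
  proof -
    have eq: "(\<lambda>t. pd \<mu> (\<lambda>x::real^'n. x $ \<nu>)) = (\<lambda>t x. (\<lambda>_. if \<mu> = \<nu> then 1 else 0) t)"
      by (simp add: pd_coord fun_eq_iff)
    show ?thesis by (subst eq) (rule Ck_family_const, rule continuous_on_const)
  qed
  then show ?case using Suc Ck_family_imp_0 unfolding Ck_family_Suc_iff by blast
qed

lemma smooth_fn_differentiable: "smooth_fn f \<Longrightarrow> (\<lambda>s. f (x + s *\<^sub>R axis \<mu> 1)) differentiable (at 0)"
  unfolding smooth_fn_def by (drule spec[of _ "[]"]) simp

lemma smooth_fn_continuous: "smooth_fn f \<Longrightarrow> continuous_on UNIV f"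
  unfolding smooth_fn_def by (drule spec[of _ "[]"]) simp

lemma smooth_fn_pd:
  assumes "smooth_fn f"
  shows "smooth_fn (pd \<mu> f)"
proof -
  have "Ck_family (Suc k) (\<lambda>_. f)" for k
    using assms unfolding smooth_fn_iff_Ck_family by blast
  then have "Ck_family k (\<lambda>_. pd \<mu> f)" for k
    by (rule Ck_family_pd)
  then show ?thesis unfolding smooth_fn_iff_Ck_family by blast
qed

lemma Ck_family_scaleR: "smooth_fn f \<Longrightarrow> Ck_family k (\<lambda>t x. f (t *\<^sub>R x))"
proof (induction k arbitrary: f)
  case 0
  have "continuous_on ({0..1} \<times> UNIV) (\<lambda>p. f (fst p *\<^sub>R snd p))"
    by (rule continuous_on_compose2[OF smooth_fn_continuous[OF 0]]) (auto intro!: continuous_intros)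
  moreover have "(\<lambda>s. f (t *\<^sub>R (x + s *\<^sub>R axis \<mu> 1))) differentiable (at 0)" for t x \<mu>
    by (rule differentiable_scaleR_line[OF smooth_fn_differentiable[OF 0]])
  ultimately show ?case by simp
next
  case (Suc k)
  have "Ck_family k (\<lambda>t. pd \<mu> (\<lambda>x. f (t *\<^sub>R x)))" for \<mu>
  proof (rule Ck_family_cong)
    show "Ck_family k (\<lambda>t x. t * pd \<mu> f (t *\<^sub>R x))"
      by (rule Ck_family_mult[OF Ck_family_const[OF continuous_on_id] Suc.IH[OF smooth_fn_pd[OF Suc.prems]]])
    show "(\<lambda>x. t * pd \<mu> f (t *\<^sub>R x)) = pd \<mu> (\<lambda>x. f (t *\<^sub>R x))" for t
      by (rule ext, rule pd_scaleR[symmetric], rule smooth_fn_differentiable[OF Suc.prems])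
  qed
  moreover have "Ck_family 0 (\<lambda>t x. f (t *\<^sub>R x))"
    using Suc.IH[OF Suc.prems] Ck_family_imp_0 by blast
  ultimately show ?case unfolding Ck_family_Suc_iff by blast
qed

lemma smooth_fn_add: "smooth_fn f \<Longrightarrow> smooth_fn g \<Longrightarrow> smooth_fn (\<lambda>x. f x + g x)"
  unfolding smooth_fn_iff_Ck_family
  by (intro allI, rule Ck_family_add[where H="\<lambda>_. f" and G="\<lambda>_. g", simplified]) auto

lemma smooth_fn_mult: "smooth_fn f \<Longrightarrow> smooth_fn g \<Longrightarrow> smooth_fn (\<lambda>x. f x * g x)"
  unfolding smooth_fn_iff_Ck_family
  by (intro allI, rule Ck_family_mult[where H="\<lambda>_. f" and G="\<lambda>_. g", simplified]) auto

lemma smooth_fn_const: "smooth_fn (\<lambda>x::real^'n::finite. c)"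
  unfolding smooth_fn_iff_Ck_family by (intro allI, rule Ck_family_const[where g="\<lambda>_. c", simplified])

lemma smooth_fn_coord: "smooth_fn (\<lambda>x::real^'n::finite. x $ \<nu>)"
  unfolding smooth_fn_iff_Ck_family by (intro allI, rule Ck_family_coord)

lemma smooth_fn_sum:
  "finite A \<Longrightarrow> (\<And>i. i \<in> A \<Longrightarrow> smooth_fn (f i)) \<Longrightarrow> smooth_fn (\<lambda>x. \<Sum>i\<in>A. f i x)"
  unfolding smooth_fn_iff_Ck_family
  by (intro allI, rule Ck_family_sum[where H="\<lambda>i _. f i", simplified]) auto

lemma smooth_fn_diff: "smooth_fn f \<Longrightarrow> smooth_fn g \<Longrightarrow> smooth_fn (\<lambda>x. f x - g x)"
  using smooth_fn_add[OF _ smooth_fn_mult[OF smooth_fn_const[of "-1"]]] by simp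

lemma continuous_on_Ck_family_compose:
  assumes "Ck_family k H" and "continuous_on S g"
  shows "continuous_on (S \<times> {0..1}) (\<lambda>(s, t). H t (g s))"
proof -
  have "continuous_on (S \<times> {0..1}) ((\<lambda>p. H (fst p) (snd p)) \<circ> (\<lambda>(s, t). (t, g s)))"
  proof (rule continuous_on_compose)
    show "continuous_on (S \<times> {0..1}) (\<lambda>(s, t). (t, g s))"
      unfolding case_prod_beta
      by (intro continuous_intros continuous_on_compose2[OF assms(2)]) auto
    show "continuous_on ((\<lambda>(s, t). (t, g s)) ` (S \<times> {0..1})) (\<lambda>p. H (fst p) (snd p))"
      by (rule continuous_on_subset[OF Ck_family_continuousD[OF assms(1)]]) auto
  qed
  then show ?thesis by (simp add: o_def case_prod_beta)
qed

lemma has_real_derivative_integral_Ck_family: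
  assumes "Ck_family (Suc k) H"
  shows "((\<lambda>s. integral {0..1} (\<lambda>t. H t (x + s *\<^sub>R axis \<mu> 1))) has_real_derivative
           integral {0..1} (\<lambda>t. pd \<mu> (H t) x)) (at 0)"
proof -
  have H0: "Ck_family 0 H" and H1: "Ck_family 0 (\<lambda>t. pd \<mu> (H t))"
    using assms Ck_family_imp_0 Ck_family_pd by blast+
  have "((\<lambda>s. integral (cbox 0 1) (\<lambda>t. H t (x + s *\<^sub>R axis \<mu> 1))) has_field_derivative
      integral (cbox 0 1) (\<lambda>t. pd \<mu> (H t) (x + 0 *\<^sub>R axis \<mu> 1))) (at 0 within UNIV)"
  proof (rule leibniz_rule_field_derivative[where fx="\<lambda>s t. pd \<mu> (H t) (x + s *\<^sub>R axis \<mu> 1)"])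
    fix s t :: real assume "t \<in> cbox 0 1"
    then have "\<And>y. (\<lambda>s. H t (y + s *\<^sub>R axis \<mu> 1)) differentiable (at 0)"
      using H0 by simp
    from has_real_derivative_pd_line[OF this]
    show "((\<lambda>s. H t (x + s *\<^sub>R axis \<mu> 1)) has_field_derivative
        pd \<mu> (H t) (x + s *\<^sub>R axis \<mu> 1)) (at s within UNIV)"
      by simp
  next
    fix s :: real
    have cont: "continuous_on ({s} \<times> {0..1}) (\<lambda>(s, t). H t (x + s *\<^sub>R axis \<mu> 1))"
      by (rule continuous_on_Ck_family_compose[OF H0]) (intro continuous_intros)
    have "continuous_on {0..1} ((\<lambda>(s, t). H t (x + s *\<^sub>R axis \<mu> 1)) \<circ> (\<lambda>t. (s, t)))"
      by (intro continuous_on_compose continuous_on_subset[OF cont]) (auto intro!: continuous_intros)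
    then have "continuous_on {0..1} (\<lambda>t. H t (x + s *\<^sub>R axis \<mu> 1))"
      by (simp add: o_def)
    then show "(\<lambda>t. H t (x + s *\<^sub>R axis \<mu> 1)) integrable_on cbox 0 1"
      by (simp add: integrable_continuous_real)
  next
    show "continuous_on (UNIV \<times> cbox 0 1) (\<lambda>(s, t). pd \<mu> (H t) (x + s *\<^sub>R axis \<mu> 1))"
      using continuous_on_Ck_family_compose[OF H1, of UNIV "\<lambda>s. x + s *\<^sub>R axis \<mu> 1"]
      by (simp add: continuous_intros)
  qed auto
  then show ?thesis by simp
qed

lemma pd_integral:
  assumes "Ck_family (Suc k) H"
  shows "pd \<mu> (\<lambda>x. integral {0..1} (\<lambda>t. H t x)) x = integral {0..1} (\<lambda>t. pd \<mu> (H t) x)"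
  by (rule pd_eqI, rule has_real_derivative_integral_Ck_family[OF assms])

lemma Ck_family_0_integral:
  assumes "Ck_family (Suc k) H"
  shows "Ck_family 0 (\<lambda>_ x. integral {0..1} (\<lambda>t. H t x))"
proof -
  have "continuous_on (UNIV \<times> cbox 0 1) (\<lambda>(x, t). H t x)"
    using continuous_on_Ck_family_compose[OF assms, of UNIV "\<lambda>x. x"] by simp
  then have "continuous_on UNIV (\<lambda>x. integral (cbox 0 1) (\<lambda>t. H t x))"
    by (rule integral_continuous_on_param)
  then have cont: "continuous_on UNIV (\<lambda>x. integral {0..1} (\<lambda>t. H t x))"
    by simp
  have "continuous_on ({0..1} \<times> UNIV) (\<lambda>p. integral {0..1} (\<lambda>t. H t (snd p)))"
    by (rule continuous_on_compose2[OF cont, of _ snd]) (auto intro: continuous_intros)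
  moreover have "(\<lambda>s. integral {0..1} (\<lambda>t. H t (x + s *\<^sub>R axis \<mu> 1))) differentiable (at 0)" for x \<mu>
    using has_real_derivative_integral_Ck_family[OF assms] real_differentiable_def by blast
  ultimately show ?thesis by simp
qed

lemma Ck_family_integral:
  "Ck_family (Suc k) H \<Longrightarrow> Ck_family k (\<lambda>_ x. integral {0..1} (\<lambda>t. H t x))"
proof (induction k arbitrary: H)
  case 0
  then show ?case by (rule Ck_family_0_integral)
next
  case (Suc k)
  have "(\<lambda>x. integral {0..1} (\<lambda>t. pd \<mu> (H t) x)) = pd \<mu> (\<lambda>x. integral {0..1} (\<lambda>t. H t x))" for \<mu>
    by (rule ext, rule pd_integral[OF Suc.prems, symmetric])
  moreover have "Ck_family k (\<lambda>_ x. integral {0..1} (\<lambda>t. pd \<mu> (H t) x))" for \<mu>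
    by (rule Suc.IH, rule Ck_family_pd[OF Suc.prems])
  ultimately show ?case
    using Ck_family_0_integral[OF Suc.prems] unfolding Ck_family_Suc_iff by simp
qed

lemma smooth_fn_integral:
  "(\<And>k. Ck_family k H) \<Longrightarrow> smooth_fn (\<lambda>x. integral {0..1} (\<lambda>t. H t x))"
  unfolding smooth_fn_iff_Ck_family using Ck_family_integral by blast

lemma smooth_conn_of:
  assumes "\<And>a b \<mu> \<nu>. smooth_fn (R a b \<mu> \<nu>)"
  shows "smooth_fn (conn_of R a b \<mu>)"
proof -
  have eq: "conn_of R a b \<mu> = (\<lambda>x. integral {0..1} (\<lambda>t. t * (\<Sum>\<nu>\<in>UNIV. x $ \<nu> * R a b \<nu> \<mu> (t *\<^sub>R x))))"
    by (rule ext) (simp add: conn_of_def)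
  have "Ck_family k (\<lambda>t x. t * (\<Sum>\<nu>\<in>UNIV. x $ \<nu> * R a b \<nu> \<mu> (t *\<^sub>R x)))" for k
    by (intro Ck_family_mult[OF Ck_family_const[OF continuous_on_id]]
        Ck_family_sum Ck_family_mult[OF Ck_family_coord] Ck_family_scaleR assms) auto
  then show ?thesis unfolding eq by (rule smooth_fn_integral)
qed

definition vielbein_w_dev :: "'n::finite connection \<Rightarrow> 'n \<Rightarrow> 'n \<Rightarrow> real^'n \<Rightarrow> real" where
  "vielbein_w_dev \<omega> a \<mu> x = integral {0..1} (\<lambda>t. \<Sum>b\<in>UNIV. \<omega> a b \<mu> (t *\<^sub>R x) * t * x $ b)"

definition vielbein_R_dev :: "'n::finite curvature \<Rightarrow> 'n \<Rightarrow> 'n \<Rightarrow> real^'n \<Rightarrow> real" where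
  "vielbein_R_dev R a \<mu> x =
     integral {0..1} (\<lambda>t. t * (1 - t) * (\<Sum>b\<in>UNIV. \<Sum>\<nu>\<in>UNIV. x $ b * x $ \<nu> * R a b \<nu> \<mu> (t *\<^sub>R x)))"

lemma vielbein_w_eq: "vielbein_w \<omega> a \<mu> x = (if a = \<mu> then 1 else 0) + vielbein_w_dev \<omega> a \<mu> x"
  by (simp add: vielbein_w_def vielbein_w_dev_def)

lemma vielbein_R_eq: "vielbein_R R a \<mu> x = (if a = \<mu> then 1 else 0) + vielbein_R_dev R a \<mu> x"
  by (simp add: vielbein_R_def vielbein_R_dev_def)

lemma smooth_vielbein_w_dev:
  assumes "\<And>a b \<mu>. smooth_fn (\<omega> a b \<mu>)"
  shows "smooth_fn (vielbein_w_dev \<omega> a \<mu>)"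
proof -
  have eq: "vielbein_w_dev \<omega> a \<mu> = (\<lambda>x. integral {0..1} (\<lambda>t. \<Sum>b\<in>UNIV. \<omega> a b \<mu> (t *\<^sub>R x) * t * x $ b))"
    by (rule ext) (simp add: vielbein_w_dev_def)
  have "Ck_family k (\<lambda>t x. \<Sum>b\<in>UNIV. \<omega> a b \<mu> (t *\<^sub>R x) * t * x $ b)" for k
    by (intro Ck_family_sum Ck_family_mult[OF Ck_family_mult[OF Ck_family_scaleR Ck_family_const[OF continuous_on_id]]
        Ck_family_coord] assms) auto
  then show ?thesis unfolding eq by (intro smooth_fn_integral)
qed

lemma smooth_vielbein_R_dev:
  assumes "\<And>a b \<mu> \<nu>. smooth_fn (R a b \<mu> \<nu>)"
  shows "smooth_fn (vielbein_R_dev R a \<mu>)"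
proof -
  have eq: "vielbein_R_dev R a \<mu> =
      (\<lambda>x. integral {0..1} (\<lambda>t. t * (1 - t) * (\<Sum>b\<in>UNIV. \<Sum>\<nu>\<in>UNIV. x $ b * x $ \<nu> * R a b \<nu> \<mu> (t *\<^sub>R x))))"
    by (rule ext) (simp add: vielbein_R_dev_def)
  have "Ck_family k (\<lambda>t x. t * (1 - t) * (\<Sum>b\<in>UNIV. \<Sum>\<nu>\<in>UNIV. x $ b * x $ \<nu> * R a b \<nu> \<mu> (t *\<^sub>R x)))" for k
    by (intro Ck_family_mult[OF Ck_family_const] Ck_family_sum
        Ck_family_mult[OF Ck_family_mult[OF Ck_family_coord Ck_family_coord]] Ck_family_scaleR assms)
       (auto intro!: continuous_intros)
  then show ?thesis unfolding eq by (intro smooth_fn_integral)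
qed

lemma smooth_vielbein_w:
  assumes "\<And>a b \<mu>. smooth_fn (\<omega> a b \<mu>)"
  shows "smooth_fn (vielbein_w \<omega> a \<mu>)"
  unfolding vielbein_w_eq by (intro smooth_fn_add smooth_fn_const smooth_vielbein_w_dev assms)

lemma dform1_eq: "dform1 w \<nu> \<rho> = (\<lambda>y. pd \<nu> (w \<rho>) y - pd \<rho> (w \<nu>) y)"
  by (rule ext) (simp add: dform1_def)

lemma wedge11_eq: "wedge11 w s \<nu> \<rho> = (\<lambda>y. w \<nu> y * s \<rho> y - w \<rho> y * s \<nu> y)"
  by (rule ext) (simp add: wedge11_def)

lemma curv_eq: "curv \<omega> a b = (\<lambda>\<alpha> \<beta> y. dform1 (\<omega> a b) \<alpha> \<beta> y + (\<Sum>c\<in>UNIV. wedge11 (\<omega> a c) (\<omega> c b) \<alpha> \<beta> y))"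
  by (intro ext) (simp add: curv_def)

lemma smooth_dform1:
  assumes "\<And>\<mu>. smooth_fn (w \<mu>)"
  shows "smooth_fn (dform1 w \<mu> \<nu>)"
  unfolding dform1_eq by (intro smooth_fn_diff smooth_fn_pd assms)

lemma smooth_wedge11:
  assumes "\<And>\<mu>. smooth_fn (w \<mu>)" and "\<And>\<mu>. smooth_fn (v \<mu>)"
  shows "smooth_fn (wedge11 w v \<mu> \<nu>)"
  unfolding wedge11_eq by (intro smooth_fn_diff smooth_fn_mult assms)

lemma smooth_curv:
  assumes "\<And>a b \<mu>. smooth_fn (\<omega> a b \<mu>)"
  shows "smooth_fn (curv \<omega> a b \<mu> \<nu>)"
  unfolding curv_eq by (intro smooth_fn_add smooth_fn_sum smooth_dform1 smooth_wedge11 assms) auto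

lemma mean_value_linear_bound:
  fixes \<phi> \<phi>' :: "real \<Rightarrow> real"
  assumes D: "\<And>s. (\<phi> has_real_derivative \<phi>' s) (at s)"
    and B: "\<And>s. \<bar>s\<bar> \<le> \<bar>b\<bar> \<Longrightarrow> \<bar>\<phi>' s - c\<bar> \<le> e"
  shows "\<bar>\<phi> b - \<phi> 0 - b * c\<bar> \<le> e * \<bar>b\<bar>"
proof -
  have "norm ((\<phi> b - b * c) - (\<phi> 0 - 0 * c)) \<le> e * norm (b - 0)"
  proof (rule field_differentiable_bound[where S="{-\<bar>b\<bar>..\<bar>b\<bar>}" and f'="\<lambda>s. \<phi>' s - c"])
    show "((\<lambda>s. \<phi> s - s * c) has_field_derivative \<phi>' s - c) (at s within {-\<bar>b\<bar>..\<bar>b\<bar>})" for s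
      by (auto intro!: derivative_eq_intros has_field_derivative_at_within[OF D])
  qed (use B in auto)
  then show ?thesis by (simp add: algebra_simps)
qed

lemma smooth_fn_increment_bound:
  fixes f :: "real^'n::finite \<Rightarrow> real"
  assumes S: "smooth_fn f" and fin: "finite S" and e: "e \<ge> 0" and d: "d > 0"
    and C: "\<And>y i. norm (y - x) < d \<Longrightarrow> \<bar>pd i f y - pd i f x\<bar> \<le> e"
  shows "\<forall>h. norm h < d \<longrightarrow> (\<forall>i. i \<notin> S \<longrightarrow> h $ i = 0) \<longrightarrow>
     \<bar>f (x + h) - f x - (\<Sum>i\<in>S. h $ i * pd i f x)\<bar> \<le> e * (\<Sum>i\<in>S. \<bar>h $ i\<bar>)"
  using fin
proof (induction S rule: finite_induct)
  case empty
  show ?case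
  proof (intro allI impI)
    fix h :: "real^'n" assume "\<forall>i. i \<notin> {} \<longrightarrow> h $ i = 0"
    then have "h = 0" by (simp add: vec_eq_iff)
    then show "\<bar>f (x + h) - f x - (\<Sum>i\<in>{}. h $ i * pd i f x)\<bar> \<le> e * (\<Sum>i\<in>{}. \<bar>h $ i\<bar>)" by simp
  qed
next
  case (insert j S)
  show ?case
  proof (intro allI impI)
    fix h :: "real^'n" assume hd: "norm h < d" and hs: "\<forall>i. i \<notin> insert j S \<longrightarrow> h $ i = 0"
    define h' where "h' = h - (h $ j) *\<^sub>R axis j 1"
    have h'c: "h' $ i = (if i = j then 0 else h $ i)" for i by (simp add: h'_def axis_def)
    have h'n: "norm h' \<le> norm h" by (rule norm_le_componentwise_cart) (simp add: h'c)
    have h's: "\<forall>i. i \<notin> S \<longrightarrow> h' $ i = 0" using hs h'c by simp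
    have IH: "\<bar>f (x + h') - f x - (\<Sum>i\<in>S. h' $ i * pd i f x)\<bar> \<le> e * (\<Sum>i\<in>S. \<bar>h' $ i\<bar>)"
      using insert.IH h'n hd h's by auto
    have sumS: "(\<Sum>i\<in>S. h' $ i * pd i f x) = (\<Sum>i\<in>S. h $ i * pd i f x)"
               "(\<Sum>i\<in>S. \<bar>h' $ i\<bar>) = (\<Sum>i\<in>S. \<bar>h $ i\<bar>)"
      using insert.hyps(2) h'c by (auto intro!: sum.cong)
    define \<phi> where "\<phi> s = f (x + h' + s *\<^sub>R axis j 1)" for s
    have D: "(\<phi> has_real_derivative pd j f (x + h' + s *\<^sub>R axis j 1)) (at s)" for s
      unfolding \<phi>_def by (rule has_real_derivative_pd_line) (rule smooth_fn_differentiable[OF S])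
    have B: "\<bar>pd j f (x + h' + s *\<^sub>R axis j 1) - pd j f x\<bar> \<le> e" if "\<bar>s\<bar> \<le> \<bar>h $ j\<bar>" for s
    proof (rule C)
      have "norm (h' + s *\<^sub>R axis j 1) \<le> norm h"
        by (rule norm_le_componentwise_cart) (use that in \<open>simp add: h'c axis_def\<close>)
      then show "norm (x + h' + s *\<^sub>R axis j 1 - x) < d" using hd by (simp add: add.assoc)
    qed
    have M: "\<bar>\<phi> (h $ j) - \<phi> 0 - h $ j * pd j f x\<bar> \<le> e * \<bar>h $ j\<bar>"
      by (rule mean_value_linear_bound[OF D B])
    have xh: "x + h' + (h $ j) *\<^sub>R axis j 1 = x + h" by (simp add: h'_def)
    have "f (x + h) - f x - (\<Sum>i\<in>insert j S. h $ i * pd i f x) =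
          (\<phi> (h $ j) - \<phi> 0 - h $ j * pd j f x) + (f (x + h') - f x - (\<Sum>i\<in>S. h' $ i * pd i f x))"
      using insert.hyps sumS by (simp add: \<phi>_def xh)
    also have "\<bar>\<dots>\<bar> \<le> e * \<bar>h $ j\<bar> + e * (\<Sum>i\<in>S. \<bar>h' $ i\<bar>)"
      using M IH by linarith
    also have "\<dots> = e * (\<Sum>i\<in>insert j S. \<bar>h $ i\<bar>)"
      using insert.hyps sumS by (simp add: algebra_simps)
    finally show "\<bar>f (x + h) - f x - (\<Sum>i\<in>insert j S. h $ i * pd i f x)\<bar> \<le> e * (\<Sum>i\<in>insert j S. \<bar>h $ i\<bar>)" .
  qed
qed

lemma smooth_fn_has_derivative:
  fixes f :: "real^'n::finite \<Rightarrow> real"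
  assumes S: "smooth_fn f"
  shows "(f has_derivative (\<lambda>h. \<Sum>i\<in>UNIV. h $ i * pd i f x)) (at x)"
  unfolding has_derivative_at_alt
proof (intro conjI allI impI)
  show "bounded_linear (\<lambda>h. \<Sum>i\<in>UNIV. h $ i * pd i f x)"
    by (intro bounded_linear_sum bounded_linear_mult_left[THEN bounded_linear_compose] bounded_linear_vec_nth)
  fix \<epsilon> :: real assume "\<epsilon> > 0"
  define e where "e = \<epsilon> / real CARD('n)"
  have e: "e > 0" using \<open>\<epsilon> > 0\<close> by (simp add: e_def)
  have "\<forall>\<^sub>F y in nhds x. \<bar>pd i f y - pd i f x\<bar> < e" for i
  proof -
    have "continuous_on UNIV (pd i f)" using smooth_fn_continuous[OF smooth_fn_pd[OF S]] .
    then have "isCont (pd i f) x" by (simp add: continuous_on_eq_continuous_at)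
    then have "\<forall>\<^sub>F y in at x. dist (pd i f y) (pd i f x) < e" unfolding isCont_def by (rule tendstoD) (rule e)
    then show ?thesis unfolding eventually_at_filter by eventually_elim (use e in \<open>auto simp: dist_real_def\<close>)
  qed
  then have "\<forall>\<^sub>F y in nhds x. \<forall>i. \<bar>pd i f y - pd i f x\<bar> < e"
    by (rule eventually_all_finite)
  then obtain d where d: "d > 0" and dC: "\<And>y. dist y x < d \<Longrightarrow> \<forall>i. \<bar>pd i f y - pd i f x\<bar> < e"
    unfolding eventually_nhds_metric by blast
  have C: "\<And>y i. norm (y - x) < d \<Longrightarrow> \<bar>pd i f y - pd i f x\<bar> \<le> e"
    using dC by (simp add: dist_norm less_imp_le)
  have A: "\<forall>h. norm h < d \<longrightarrow> (\<forall>i. i \<notin> UNIV \<longrightarrow> h $ i = 0) \<longrightarrow>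
     \<bar>f (x + h) - f x - (\<Sum>i\<in>UNIV. h $ i * pd i f x)\<bar> \<le> e * (\<Sum>i\<in>UNIV. \<bar>h $ i\<bar>)"
    by (rule smooth_fn_increment_bound[OF S finite[of UNIV] less_imp_le[OF e] d C])
  show "\<exists>d>0. \<forall>y. norm (y - x) < d \<longrightarrow> norm (f y - f x - (\<Sum>i\<in>UNIV. (y - x) $ i * pd i f x)) \<le> \<epsilon> * norm (y - x)"
  proof (intro exI[of _ d] conjI allI impI d)
    fix y assume yd: "norm (y - x) < d"
    have "norm (f y - f x - (\<Sum>i\<in>UNIV. (y - x) $ i * pd i f x)) \<le> e * (\<Sum>i\<in>UNIV. \<bar>(y - x) $ i\<bar>)"
      using A[rule_format, OF yd] by simp
    also have "\<dots> \<le> e * (\<Sum>i\<in>(UNIV::'n set). norm (y - x))"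
      by (intro mult_left_mono sum_mono component_le_norm_cart) (use e in auto)
    also have "\<dots> = \<epsilon> * norm (y - x)" by (simp add: e_def)
    finally show "norm (f y - f x - (\<Sum>i\<in>UNIV. (y - x) $ i * pd i f x)) \<le> \<epsilon> * norm (y - x)" .
  qed
qed

lemma has_real_derivative_smooth_fn_ray:
  fixes f :: "real^'n::finite \<Rightarrow> real"
  assumes S: "smooth_fn f"
  shows "((\<lambda>l. f (l *\<^sub>R x)) has_real_derivative (\<Sum>i\<in>UNIV. x $ i * pd i f (l *\<^sub>R x))) (at l)"
proof -
  have "((\<lambda>l. l *\<^sub>R x) has_derivative (\<lambda>d. d *\<^sub>R x)) (at l)"
    by (auto intro!: derivative_eq_intros)
  from has_derivative_compose[OF this smooth_fn_has_derivative[OF S, of "l *\<^sub>R x"]]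
  have "((\<lambda>l. f (l *\<^sub>R x)) has_derivative (\<lambda>d. \<Sum>i\<in>UNIV. (d *\<^sub>R x) $ i * pd i f (l *\<^sub>R x))) (at l)" by (simp add: o_def)
  moreover have "(\<lambda>d. \<Sum>i\<in>UNIV. (d *\<^sub>R x) $ i * pd i f (l *\<^sub>R x)) = (\<lambda>d. d * (\<Sum>i\<in>UNIV. x $ i * pd i f (l *\<^sub>R x)))"
    by (auto simp: sum_distrib_left algebra_simps)
  ultimately have "((\<lambda>l. f (l *\<^sub>R x)) has_derivative (\<lambda>d. d * (\<Sum>i\<in>UNIV. x $ i * pd i f (l *\<^sub>R x)))) (at l)" by simp
  moreover have "(\<lambda>d. d * (\<Sum>i\<in>UNIV. x $ i * pd i f (l *\<^sub>R x))) = (*) (\<Sum>i\<in>UNIV. x $ i * pd i f (l *\<^sub>R x))"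
    by (rule ext) (simp add: mult.commute)
  ultimately show ?thesis by (simp add: has_field_derivative_def)
qed

lemma continuous_on_line:
  fixes g :: "real^'n::finite \<Rightarrow> real"
  assumes "continuous_on UNIV g"
  shows "continuous_on S (\<lambda>v. g (y + v *\<^sub>R e))"
  by (rule continuous_on_compose2[OF assms]) (auto intro!: continuous_intros)

lemma smooth_fn_diff_eq_integral_pd:
  fixes f :: "real^'n::finite \<Rightarrow> real"
  assumes S: "smooth_fn f" and u: "-1 \<le> u"
  shows "f (y + u *\<^sub>R axis \<nu> 1) - f (y + (-1) *\<^sub>R axis \<nu> 1) = integral {-1..u} (\<lambda>v. pd \<nu> f (y + v *\<^sub>R axis \<nu> 1))"
proof -
  have "((\<lambda>v. pd \<nu> f (y + v *\<^sub>R axis \<nu> 1)) has_integral f (y + u *\<^sub>R axis \<nu> 1) - f (y + (-1) *\<^sub>R axis \<nu> 1)) {-1..u}"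
  proof (rule fundamental_theorem_of_calculus[OF u])
    fix v assume "v \<in> {-1..u}"
    have "((\<lambda>v. f (y + v *\<^sub>R axis \<nu> 1)) has_real_derivative pd \<nu> f (y + v *\<^sub>R axis \<nu> 1)) (at v)"
      by (rule has_real_derivative_pd_line) (rule smooth_fn_differentiable[OF S])
    then show "((\<lambda>v. f (y + v *\<^sub>R axis \<nu> 1)) has_vector_derivative pd \<nu> f (y + v *\<^sub>R axis \<nu> 1)) (at v within {-1..u})"
      by (simp add: has_real_derivative_iff_has_vector_derivative[symmetric] has_field_derivative_at_within)
  qed
  then show ?thesis by (simp add: integral_unique)
qed

lemma pd_diff_eq_integral_pd_pd:
  fixes f :: "real^'n::finite \<Rightarrow> real"
  assumes S: "smooth_fn f" and u: "-1 \<le> u"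
  shows "pd \<mu> f (x + u *\<^sub>R axis \<nu> 1) - pd \<mu> f (x + (-1) *\<^sub>R axis \<nu> 1) =
    integral {-1..u} (\<lambda>v. pd \<mu> (pd \<nu> f) (x + v *\<^sub>R axis \<nu> 1))"
proof -
  define e1 :: "real^'n" where "e1 = axis \<mu> 1"
  define e2 :: "real^'n" where "e2 = axis \<nu> 1"
  have smooth_pd: "smooth_fn (pd \<nu> f)" using smooth_fn_pd[OF S] .
  have cont_pd_pd: "continuous_on UNIV (pd \<mu> (pd \<nu> f))" using smooth_fn_continuous[OF smooth_fn_pd[OF smooth_pd]] .
  have ftc: "f (x + s *\<^sub>R e1 + u *\<^sub>R e2) - f (x + s *\<^sub>R e1 + (-1) *\<^sub>R e2) =
      integral {-1..u} (\<lambda>v. pd \<nu> f (x + s *\<^sub>R e1 + v *\<^sub>R e2))" for s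
    unfolding e2_def by (rule smooth_fn_diff_eq_integral_pd[OF S u])
  have deriv_diff: "((\<lambda>s. f (x + s *\<^sub>R e1 + u *\<^sub>R e2) - f (x + s *\<^sub>R e1 + (-1) *\<^sub>R e2)) has_real_derivative
      pd \<mu> f (x + u *\<^sub>R e2) - pd \<mu> f (x + (-1) *\<^sub>R e2)) (at 0)"
  proof -
    have "((\<lambda>s. f ((x + u *\<^sub>R e2) + s *\<^sub>R e1)) has_real_derivative pd \<mu> f ((x + u *\<^sub>R e2) + 0 *\<^sub>R e1)) (at 0)"
      unfolding e1_def by (rule has_real_derivative_pd_line) (rule smooth_fn_differentiable[OF S])
    moreover have "((\<lambda>s. f ((x + (-1) *\<^sub>R e2) + s *\<^sub>R e1))
        has_real_derivative pd \<mu> f ((x + (-1) *\<^sub>R e2) + 0 *\<^sub>R e1)) (at 0)"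
      unfolding e1_def by (rule has_real_derivative_pd_line) (rule smooth_fn_differentiable[OF S])
    ultimately have "((\<lambda>s. f ((x + u *\<^sub>R e2) + s *\<^sub>R e1) - f ((x + (-1) *\<^sub>R e2) + s *\<^sub>R e1)) has_real_derivative
        pd \<mu> f ((x + u *\<^sub>R e2) + 0 *\<^sub>R e1) - pd \<mu> f ((x + (-1) *\<^sub>R e2) + 0 *\<^sub>R e1)) (at 0)"
      by (rule DERIV_diff)
    then show ?thesis by (simp only: ac_simps scaleR_zero_left add_0_left)
  qed
  have deriv_integral: "((\<lambda>s. integral (cbox (-1) u) (\<lambda>v. pd \<nu> f (x + s *\<^sub>R e1 + v *\<^sub>R e2))) has_field_derivative
      integral (cbox (-1) u) (\<lambda>v. pd \<mu> (pd \<nu> f) (x + 0 *\<^sub>R e1 + v *\<^sub>R e2))) (at 0 within UNIV)"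
  proof (rule leibniz_rule_field_derivative[where fx="\<lambda>s v. pd \<mu> (pd \<nu> f) (x + s *\<^sub>R e1 + v *\<^sub>R e2)"])
    fix s v :: real
    have "((\<lambda>s. pd \<nu> f ((x + v *\<^sub>R e2) + s *\<^sub>R e1))
        has_real_derivative pd \<mu> (pd \<nu> f) ((x + v *\<^sub>R e2) + s *\<^sub>R e1)) (at s)"
      unfolding e1_def by (rule has_real_derivative_pd_line) (rule smooth_fn_differentiable[OF smooth_pd])
    then show "((\<lambda>s. pd \<nu> f (x + s *\<^sub>R e1 + v *\<^sub>R e2))
        has_field_derivative pd \<mu> (pd \<nu> f) (x + s *\<^sub>R e1 + v *\<^sub>R e2)) (at s within UNIV)"
      by (simp add: algebra_simps)
  next
    fix s :: real
    have "continuous_on (cbox (-1) u) (\<lambda>v. pd \<nu> f ((x + s *\<^sub>R e1) + v *\<^sub>R e2))"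
      by (rule continuous_on_line[OF smooth_fn_continuous[OF smooth_pd]])
    then show "(\<lambda>v. pd \<nu> f (x + s *\<^sub>R e1 + v *\<^sub>R e2)) integrable_on cbox (-1) u"
      by (simp add: integrable_continuous_real)
  next
    show "continuous_on (UNIV \<times> cbox (-1) u) (\<lambda>(s, v). pd \<mu> (pd \<nu> f) (x + s *\<^sub>R e1 + v *\<^sub>R e2))"
      unfolding case_prod_beta
      by (rule continuous_on_compose2[OF cont_pd_pd]) (auto intro!: continuous_intros)
  qed auto
  have "pd \<mu> f (x + u *\<^sub>R e2) - pd \<mu> f (x + (-1) *\<^sub>R e2) =
      integral (cbox (-1) u) (\<lambda>v. pd \<mu> (pd \<nu> f) (x + 0 *\<^sub>R e1 + v *\<^sub>R e2))"
    using DERIV_unique[OF deriv_diff] deriv_integral ftc by simp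
  then show ?thesis by (simp add: e2_def)
qed

lemma pd_pd_commute:
  fixes f :: "real^'n::finite \<Rightarrow> real"
  assumes S: "smooth_fn f"
  shows "pd \<nu> (pd \<mu> f) x = pd \<mu> (pd \<nu> f) x"
proof -
  define e2 :: "real^'n" where "e2 = axis \<nu> 1"
  have smooth_pd_nu: "smooth_fn (pd \<nu> f)" and smooth_pd_mu: "smooth_fn (pd \<mu> f)" using smooth_fn_pd[OF S] by auto
  have smooth_pd_pd: "smooth_fn (pd \<mu> (pd \<nu> f))" using smooth_fn_pd[OF smooth_pd_nu] .
  have cont_pd_pd: "continuous_on UNIV (pd \<mu> (pd \<nu> f))" using smooth_fn_continuous[OF smooth_pd_pd] .
  have deriv_diff: "((\<lambda>u. pd \<mu> f (x + u *\<^sub>R e2) - pd \<mu> f (x + (-1) *\<^sub>R e2)) has_real_derivative pd \<nu> (pd \<mu> f) x) (at 0)"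
  proof -
    have "((\<lambda>u. pd \<mu> f (x + u *\<^sub>R e2)) has_real_derivative pd \<nu> (pd \<mu> f) (x + 0 *\<^sub>R e2)) (at 0)"
      unfolding e2_def by (rule has_real_derivative_pd_line) (rule smooth_fn_differentiable[OF smooth_pd_mu])
    then show ?thesis by (auto intro!: derivative_eq_intros)
  qed
  have deriv_integral: "((\<lambda>u. integral {-1..u} (\<lambda>v. pd \<mu> (pd \<nu> f) (x + v *\<^sub>R e2)))
      has_real_derivative pd \<mu> (pd \<nu> f) (x + 0 *\<^sub>R e2)) (at 0)"
  proof -
    have "((\<lambda>u. integral {-1..u} (\<lambda>v. pd \<mu> (pd \<nu> f) (x + v *\<^sub>R e2)))
        has_real_derivative pd \<mu> (pd \<nu> f) (x + 0 *\<^sub>R e2)) (at 0 within {-1..1})"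
      by (rule integral_has_real_derivative) (auto intro: continuous_on_line[OF cont_pd_pd])
    moreover have "at (0::real) within {-1..1} = at 0"
      by (rule at_within_interior) auto
    ultimately show ?thesis by simp
  qed
  have diff_eq_integral: "\<forall>\<^sub>F u in nhds 0. pd \<mu> f (x + u *\<^sub>R e2) - pd \<mu> f (x + (-1) *\<^sub>R e2)
      = integral {-1..u} (\<lambda>v. pd \<mu> (pd \<nu> f) (x + v *\<^sub>R e2))"
  proof -
    have "\<forall>\<^sub>F u in nhds (0::real). u \<in> {-1<..}" by (rule eventually_nhds_in_open) auto
    then show ?thesis
    proof eventually_elim
      case (elim u)
      then show ?case using pd_diff_eq_integral_pd_pd[OF S, of u \<mu> x \<nu>] by (simp add: e2_def)
    qed
  qed
  have "((\<lambda>u. integral {-1..u} (\<lambda>v. pd \<mu> (pd \<nu> f) (x + v *\<^sub>R e2))) has_real_derivative pd \<nu> (pd \<mu> f) x) (at 0)"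
    using deriv_diff DERIV_cong_ev[OF refl diff_eq_integral refl] by simp
  from DERIV_unique[OF this deriv_integral] show ?thesis by simp
qed

section \<open>The radial Euler operator\<close>

lemma integral_rescale_01:
  fixes g :: "real \<Rightarrow> real"
  assumes g: "continuous_on UNIV g" and l: "0 \<le> l"
  shows "integral {0..1} (\<lambda>t. l * g (l * t)) = integral {0..l} g"
proof -
  have "((\<lambda>t. l *\<^sub>R g (l * t)) has_integral integral {l * 0..l * 1} g) {0..1}"
    by (rule has_integral_substitution[where c=0 and d=l])
      (use l in \<open>auto intro!: derivative_eq_intros continuous_on_subset[OF g] simp: mult_left_le\<close>)
  then have "((\<lambda>t. l * g (l * t)) has_integral integral {0..l} g) {0..1}"
    by simp
  then show ?thesis by (rule integral_unique)
qed

lemma has_real_derivative_integral_upper: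
  fixes g :: "real \<Rightarrow> real"
  assumes g: "continuous_on UNIV g" and "0 < l"
  shows "((\<lambda>l. integral {0..l} g) has_real_derivative g l) (at l)"
proof -
  have "((\<lambda>l. integral {0..l} g) has_real_derivative g l) (at l within {0..l+1})"
    by (rule integral_has_real_derivative) (use assms in \<open>auto intro: continuous_on_subset[OF g]\<close>)
  moreover have "at l within {0..l+1} = at l" by (rule at_within_interior) (use assms in auto)
  ultimately show ?thesis by simp
qed

definition euler_op :: "nat \<Rightarrow> (real^'n::finite \<Rightarrow> real) \<Rightarrow> real^'n \<Rightarrow> real" where
  "euler_op k f x = real k * f x + (\<Sum>i\<in>UNIV. x $ i * pd i f x)"

lemma euler_op_1_eqI:
  fixes C :: "real^'n::finite \<Rightarrow> real"
  assumes S: "smooth_fn C" and D: "(\<Phi> has_real_derivative D) (at 1)"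
    and E: "\<And>l. 0 < l \<Longrightarrow> l * C (l *\<^sub>R x) = \<Phi> l"
  shows "euler_op 1 C x = D"
proof -
  have "((\<lambda>l. l * C (l *\<^sub>R x)) has_real_derivative 1 * (\<Sum>i\<in>UNIV. x $ i * pd i C (1 *\<^sub>R x)) + 1 * C (1 *\<^sub>R x)) (at 1)"
    by (rule DERIV_mult'[OF DERIV_ident has_real_derivative_smooth_fn_ray[OF S]])
  then have A: "((\<lambda>l. l * C (l *\<^sub>R x)) has_real_derivative C x + (\<Sum>i\<in>UNIV. x $ i * pd i C x)) (at 1)"
      by (simp add: add.commute)
  have ev: "\<forall>\<^sub>F l in nhds 1. l * C (l *\<^sub>R x) = \<Phi> l"
  proof -
    have "\<forall>\<^sub>F l in nhds (1::real). l \<in> {0<..}" by (rule eventually_nhds_in_open) auto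
    then show ?thesis by eventually_elim (simp add: E)
  qed
  have "(\<Phi> has_real_derivative C x + (\<Sum>i\<in>UNIV. x $ i * pd i C x)) (at 1)"
    using A DERIV_cong_ev[OF refl ev refl] by simp
  from DERIV_unique[OF this D] show ?thesis by (simp add: euler_op_def)
qed

lemma euler_op_eq_0_imp_eq_0:
  fixes C :: "real^'n::finite \<Rightarrow> real"
  assumes S: "smooth_fn C" and k: "k > 0"
    and E: "\<And>y. euler_op k C y = 0"
  shows "C x = 0"
proof -
  define \<phi> where "\<phi> l = l ^ k * C (l *\<^sub>R x)" for l
  have "(\<phi> has_real_derivative 0) (at l)" for l
  proof -
    have "(\<phi> has_real_derivative l ^ k * (\<Sum>i\<in>UNIV. x $ i * pd i C (l *\<^sub>R x))
        + (real k * l ^ (k - Suc 0)) * C (l *\<^sub>R x)) (at l)"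
      unfolding \<phi>_def by (rule DERIV_mult'[OF DERIV_pow has_real_derivative_smooth_fn_ray[OF S]])
    moreover have "l ^ k * (\<Sum>i\<in>UNIV. x $ i * pd i C (l *\<^sub>R x)) + (real k * l ^ (k - Suc 0)) * C (l *\<^sub>R x) =
        l ^ (k - 1) * (real k * C (l *\<^sub>R x) + (\<Sum>i\<in>UNIV. (l *\<^sub>R x) $ i * pd i C (l *\<^sub>R x)))"
    proof -
      have "l ^ k = l ^ (k - 1) * l" using k by (simp add: power_eq_if)
      then show ?thesis by (simp add: algebra_simps sum_distrib_left sum_distrib_right)
    qed
    ultimately show ?thesis using E[of "l *\<^sub>R x"] by (simp add: euler_op_def)
  qed
  then have "\<phi> 1 = \<phi> 0" by (intro DERIV_isconst_all) auto
  then show ?thesis using k by (simp add: \<phi>_def)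
qed

lemma euler_op_diff:
  assumes "smooth_fn f" and "smooth_fn g"
  shows "euler_op k (\<lambda>y. f y - g y) x = euler_op k f x - euler_op k g x"
proof -
  have pd_fg: "pd i (\<lambda>y. f y - g y) x = pd i f x - pd i g x" for i
    by (rule pd_diff) (intro smooth_fn_differentiable assms)+
  show ?thesis unfolding euler_op_def pd_fg by (simp add: algebra_simps sum_subtractf)
qed

lemma euler_op_inject:
  assumes "smooth_fn f" and "smooth_fn g" and "k > 0"
    and "\<And>y. euler_op k f y = euler_op k g y"
  shows "f x = g x"
  using euler_op_eq_0_imp_eq_0[of "\<lambda>y. f y - g y" k x] assms
  by (simp add: smooth_fn_diff euler_op_diff)

lemma continuous_on_ray:
  fixes f :: "real^'n::finite \<Rightarrow> real"
  assumes "smooth_fn f"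
  shows "continuous_on S (\<lambda>s. f (s *\<^sub>R x))"
  by (rule continuous_on_compose2[OF smooth_fn_continuous[OF assms]]) (auto intro!: continuous_intros)

lemma euler_op_conn_of:
  assumes S: "\<And>a b \<mu> \<nu>. smooth_fn (R a b \<mu> \<nu>)"
  shows "euler_op 1 (conn_of R a b \<mu>) x = (\<Sum>\<nu>\<in>UNIV. x $ \<nu> * R a b \<nu> \<mu> x)"
proof -
  define g where "g s = s * (\<Sum>\<nu>\<in>UNIV. x $ \<nu> * R a b \<nu> \<mu> (s *\<^sub>R x))" for s
  have gc: "continuous_on UNIV g" unfolding g_def
    by (intro continuous_intros continuous_on_ray S)
  have "euler_op 1 (conn_of R a b \<mu>) x = g 1"
  proof (rule euler_op_1_eqI[OF smooth_conn_of[OF S] has_real_derivative_integral_upper[OF gc]])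
    fix l :: real assume l: "0 < l"
    have "l * conn_of R a b \<mu> (l *\<^sub>R x) = integral {0..1} (\<lambda>t. l * g (l * t))"
    proof -
      have eqf: "(\<lambda>t. l * g (l * t)) = (\<lambda>t. l * (t * (\<Sum>\<nu>\<in>UNIV. (l *\<^sub>R x) $ \<nu> * R a b \<nu> \<mu> (t *\<^sub>R (l *\<^sub>R x)))))"
        by (rule ext) (simp add: g_def sum_distrib_left algebra_simps)
      show ?thesis by (simp only: eqf conn_of_def integral_mult_right)
    qed
    also have "\<dots> = integral {0..l} g" by (rule integral_rescale_01[OF gc]) (use l in simp)
    finally show "l * conn_of R a b \<mu> (l *\<^sub>R x) = integral {0..l} g" .
  qed simp
  then show ?thesis by (simp add: g_def)
qed

lemma euler_op_vielbein_w_dev: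
  assumes S: "\<And>a b \<mu>. smooth_fn (\<omega> a b \<mu>)"
  shows "euler_op 1 (vielbein_w_dev \<omega> a \<mu>) x = (\<Sum>b\<in>UNIV. \<omega> a b \<mu> x * x $ b)"
proof -
  define g where "g s = (\<Sum>b\<in>UNIV. \<omega> a b \<mu> (s *\<^sub>R x) * s * x $ b)" for s
  have gc: "continuous_on UNIV g" unfolding g_def
    by (intro continuous_intros continuous_on_ray S)
  have "euler_op 1 (vielbein_w_dev \<omega> a \<mu>) x = g 1"
  proof (rule euler_op_1_eqI[OF smooth_vielbein_w_dev[OF S] has_real_derivative_integral_upper[OF gc]])
    fix l :: real assume l: "0 < l"
    have "l * vielbein_w_dev \<omega> a \<mu> (l *\<^sub>R x) = integral {0..1} (\<lambda>t. l * g (l * t))"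
    proof -
      have eqf: "(\<lambda>t. l * g (l * t)) = (\<lambda>t. l * (\<Sum>b\<in>UNIV. \<omega> a b \<mu> (t *\<^sub>R (l *\<^sub>R x)) * t * (l *\<^sub>R x) $ b))"
        by (rule ext) (simp add: g_def sum_distrib_left algebra_simps)
      show ?thesis by (simp only: eqf vielbein_w_dev_def integral_mult_right)
    qed
    also have "\<dots> = integral {0..l} g" by (rule integral_rescale_01[OF gc]) (use l in simp)
    finally show "l * vielbein_w_dev \<omega> a \<mu> (l *\<^sub>R x) = integral {0..l} g" .
  qed simp
  then show ?thesis by (simp add: g_def)
qed

lemma sum_coord_mult_integral:
  fixes f :: "'n::finite \<Rightarrow> real \<Rightarrow> real" and x :: "real^'n"
  assumes "\<And>\<mu>. continuous_on {0..1} (f \<mu>)"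
  shows "(\<Sum>\<mu>\<in>UNIV. x $ \<mu> * integral {0..1} (f \<mu>)) =
    integral {0..1} (\<lambda>t. \<Sum>\<mu>\<in>UNIV. x $ \<mu> * f \<mu> t)"
proof -
  have "(\<Sum>\<mu>\<in>UNIV. x $ \<mu> * integral {0..1} (f \<mu>)) =
      (\<Sum>\<mu>\<in>UNIV. integral {0..1} (\<lambda>t. x $ \<mu> * f \<mu> t))"
    by (simp only: integral_mult_right)
  also have "\<dots> = integral {0..1} (\<lambda>t. \<Sum>\<mu>\<in>UNIV. x $ \<mu> * f \<mu> t)"
    by (rule integral_sum[symmetric])
      (auto intro!: integrable_continuous_real continuous_intros assms)
  finally show ?thesis .
qed

lemma sum_coord_conn_of:
  assumes S: "\<And>a b \<mu> \<nu>. smooth_fn (R a b \<mu> \<nu>)"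
  shows "(\<Sum>b\<in>UNIV. x $ b * conn_of R a b \<mu> x) =
    integral {0..1} (\<lambda>s. s * (\<Sum>b\<in>UNIV. \<Sum>\<nu>\<in>UNIV. x $ b * x $ \<nu> * R a b \<nu> \<mu> (s *\<^sub>R x)))"
proof -
  have "(\<Sum>b\<in>UNIV. x $ b * conn_of R a b \<mu> x) =
      integral {0..1} (\<lambda>t. \<Sum>b\<in>UNIV. x $ b * (t * (\<Sum>\<nu>\<in>UNIV. x $ \<nu> * R a b \<nu> \<mu> (t *\<^sub>R x))))"
    unfolding conn_of_def
    by (rule sum_coord_mult_integral) (intro continuous_intros continuous_on_ray S)
  also have "\<dots> = integral {0..1} (\<lambda>s. s * (\<Sum>b\<in>UNIV. \<Sum>\<nu>\<in>UNIV. x $ b * x $ \<nu> * R a b \<nu> \<mu> (s *\<^sub>R x)))"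
    by (rule arg_cong[where f="integral {0..1}"]) (auto simp: sum_distrib_left mult_ac)
  finally show ?thesis .
qed

text \<open>Substituting \<open>s = l t\<close> writes \<open>l \<cdot> vielbein_R_dev R a \<mu> (l x)\<close> as \<open>l A(l) - B(l)\<close> with
  \<open>A(l) = \<integral>\<^sub>0\<^sup>l s p(s) ds\<close>, \<open>B(l) = \<integral>\<^sub>0\<^sup>l s\<^sup>2 p(s) ds\<close>; its derivative at \<open>l = 1\<close> is \<open>A(1)\<close>.\<close>

lemma euler_op_vielbein_R_dev:
  assumes S: "\<And>a b \<mu> \<nu>. smooth_fn (R a b \<mu> \<nu>)"
  shows "euler_op 1 (vielbein_R_dev R a \<mu>) x = (\<Sum>b\<in>UNIV. x $ b * conn_of R a b \<mu> x)"
proof -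
  define p where "p s = (\<Sum>b\<in>UNIV. \<Sum>\<nu>\<in>UNIV. x $ b * x $ \<nu> * R a b \<nu> \<mu> (s *\<^sub>R x))" for s
  have pc: "continuous_on UNIV p" unfolding p_def
    by (intro continuous_intros continuous_on_ray S)
  define A where "A l = integral {0..l} (\<lambda>s. s * p s)" for l
  define B where "B l = integral {0..l} (\<lambda>s. s\<^sup>2 * p s)" for l
  have Ac: "continuous_on UNIV (\<lambda>s. s * p s)" and Bc: "continuous_on UNIV (\<lambda>s. s\<^sup>2 * p s)"
    using pc by (auto intro!: continuous_intros)
  have deriv_A: "(A has_real_derivative 1 * p 1) (at 1)"
    unfolding A_def by (rule has_real_derivative_integral_upper[OF Ac]) simp
  have deriv_B: "(B has_real_derivative 1\<^sup>2 * p 1) (at 1)"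
    unfolding B_def by (rule has_real_derivative_integral_upper[OF Bc]) simp
  have "((\<lambda>l. l * A l - B l) has_real_derivative (1 * (1 * p 1) + 1 * A 1) - 1\<^sup>2 * p 1) (at 1)"
    by (rule DERIV_diff[OF DERIV_mult'[OF DERIV_ident deriv_A] deriv_B])
  then have deriv_lA_B: "((\<lambda>l. l * A l - B l) has_real_derivative A 1) (at 1)"
    by simp
  have "euler_op 1 (vielbein_R_dev R a \<mu>) x = A 1"
  proof (rule euler_op_1_eqI[OF smooth_vielbein_R_dev[OF S] deriv_lA_B])
    fix l :: real assume l: "0 < l"
    define g where "g s = s * (l - s) * p s" for s
    have gc: "continuous_on UNIV g" unfolding g_def using pc by (auto intro!: continuous_intros)
    have "(\<Sum>b\<in>UNIV. \<Sum>\<nu>\<in>UNIV. (l *\<^sub>R x) $ b * (l *\<^sub>R x) $ \<nu> * R a b \<nu> \<mu> (t *\<^sub>R (l *\<^sub>R x))) =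
        l * l * p (l * t)" for t
      by (simp add: p_def sum_distrib_left mult_ac)
    then have "(\<lambda>t. l * g (l * t)) = (\<lambda>t. l * (t * (1 - t) *
        (\<Sum>b\<in>UNIV. \<Sum>\<nu>\<in>UNIV. (l *\<^sub>R x) $ b * (l *\<^sub>R x) $ \<nu> * R a b \<nu> \<mu> (t *\<^sub>R (l *\<^sub>R x)))))"
      by (simp add: g_def algebra_simps)
    then have "l * vielbein_R_dev R a \<mu> (l *\<^sub>R x) = integral {0..1} (\<lambda>t. l * g (l * t))"
      by (simp only: vielbein_R_dev_def integral_mult_right)
    also have "\<dots> = integral {0..l} g" by (rule integral_rescale_01[OF gc]) (use l in simp)
    also have "\<dots> = integral {0..l} (\<lambda>s. l * (s * p s) - s\<^sup>2 * p s)"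
      by (rule arg_cong[where f="integral {0..l}"]) (auto simp: g_def algebra_simps power2_eq_square)
    also have "\<dots> = l * A l - B l"
      unfolding A_def B_def
      by (subst integral_diff) (auto intro!: integrable_continuous_real continuous_intros continuous_on_subset[OF pc])
    finally show "l * vielbein_R_dev R a \<mu> (l *\<^sub>R x) = l * A l - B l" .
  qed
  also have "A 1 = (\<Sum>b\<in>UNIV. x $ b * conn_of R a b \<mu> x)"
    by (simp add: A_def p_def sum_coord_conn_of[OF S])
  finally show ?thesis .
qed

lemma vielbein_R_eq_vielbein_w_conn_of:
  assumes S: "\<And>a b \<mu> \<nu>. smooth_fn (R a b \<mu> \<nu>)"
  shows "vielbein_R R = vielbein_w (conn_of R)"
proof (intro ext)
  fix a \<mu> x
  have Sc: "\<And>a b \<mu>. smooth_fn (conn_of R a b \<mu>)" by (rule smooth_conn_of[OF S])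
  have "vielbein_R_dev R a \<mu> x = vielbein_w_dev (conn_of R) a \<mu> x"
  proof (rule euler_op_inject[of _ _ 1])
    fix y
    show "euler_op 1 (vielbein_R_dev R a \<mu>) y = euler_op 1 (vielbein_w_dev (conn_of R) a \<mu>) y"
      unfolding euler_op_vielbein_R_dev[OF S] euler_op_vielbein_w_dev[OF Sc] by (simp add: mult.commute)
  qed (simp_all add: smooth_vielbein_R_dev smooth_vielbein_w_dev S Sc)
  then show "vielbein_R R a \<mu> x = vielbein_w (conn_of R) a \<mu> x"
    by (simp add: vielbein_R_eq vielbein_w_eq)
qed

section \<open>Contractions with the radial vector field\<close>

lemma sum_mult_sum_swap:
  fixes y :: "real^'n::finite"
  shows "(\<Sum>\<rho>\<in>UNIV. y $ \<rho> * (\<Sum>c\<in>A. f c \<rho>)) = (\<Sum>c\<in>A. \<Sum>\<rho>\<in>UNIV. y $ \<rho> * f c \<rho>)"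
  by (simp only: sum_distrib_left) (rule sum.swap)

lemma radial_contraction_wedge11:
  "(\<Sum>\<rho>\<in>UNIV. y $ \<rho> * wedge11 w s \<rho> \<nu> y) =
    (\<Sum>\<rho>\<in>UNIV. y $ \<rho> * w \<rho> y) * s \<nu> y - w \<nu> y * (\<Sum>\<rho>\<in>UNIV. y $ \<rho> * s \<rho> y)"
  by (simp add: wedge11_def sum_distrib_left sum_distrib_right sum_subtractf algebra_simps)

lemma radial_contraction_wedge12:
  assumes w: "(\<Sum>\<rho>\<in>UNIV. x $ \<rho> * w \<rho> x) = 0"
    and F1: "\<And>\<sigma>. (\<Sum>\<rho>\<in>UNIV. x $ \<rho> * F \<rho> \<sigma> x) = 0"
    and F2: "\<And>\<sigma>. (\<Sum>\<rho>\<in>UNIV. x $ \<rho> * F \<sigma> \<rho> x) = 0"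
  shows "(\<Sum>\<rho>\<in>UNIV. x $ \<rho> * wedge12 w F \<rho> \<mu> \<nu> x) = 0"
proof -
  have "(\<Sum>\<rho>\<in>UNIV. x $ \<rho> * wedge12 w F \<rho> \<mu> \<nu> x) = (1/2) * (
     (\<Sum>\<rho>\<in>UNIV. x $ \<rho> * w \<rho> x) * F \<mu> \<nu> x - (\<Sum>\<rho>\<in>UNIV. x $ \<rho> * w \<rho> x) * F \<nu> \<mu> x
   + w \<mu> x * (\<Sum>\<rho>\<in>UNIV. x $ \<rho> * F \<nu> \<rho> x) - w \<mu> x * (\<Sum>\<rho>\<in>UNIV. x $ \<rho> * F \<rho> \<nu> x)
   + w \<nu> x * (\<Sum>\<rho>\<in>UNIV. x $ \<rho> * F \<rho> \<mu> x) - w \<nu> x * (\<Sum>\<rho>\<in>UNIV. x $ \<rho> * F \<mu> \<rho> x))"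
    by (simp add: wedge12_def sum_distrib_left sum_distrib_right sum.distrib sum_subtractf algebra_simps)
  then show ?thesis by (simp add: w F1 F2)
qed

lemma radial_contraction_wedge21:
  assumes w: "(\<Sum>\<rho>\<in>UNIV. x $ \<rho> * w \<rho> x) = 0"
    and F1: "\<And>\<sigma>. (\<Sum>\<rho>\<in>UNIV. x $ \<rho> * F \<rho> \<sigma> x) = 0"
    and F2: "\<And>\<sigma>. (\<Sum>\<rho>\<in>UNIV. x $ \<rho> * F \<sigma> \<rho> x) = 0"
  shows "(\<Sum>\<rho>\<in>UNIV. x $ \<rho> * wedge21 F w \<rho> \<mu> \<nu> x) = 0"
proof -
  have "(\<Sum>\<rho>\<in>UNIV. x $ \<rho> * wedge21 F w \<rho> \<mu> \<nu> x) = (1/2) * (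
     (\<Sum>\<rho>\<in>UNIV. x $ \<rho> * w \<rho> x) * F \<mu> \<nu> x - (\<Sum>\<rho>\<in>UNIV. x $ \<rho> * w \<rho> x) * F \<nu> \<mu> x
   + w \<mu> x * (\<Sum>\<rho>\<in>UNIV. x $ \<rho> * F \<nu> \<rho> x) - w \<mu> x * (\<Sum>\<rho>\<in>UNIV. x $ \<rho> * F \<rho> \<nu> x)
   + w \<nu> x * (\<Sum>\<rho>\<in>UNIV. x $ \<rho> * F \<rho> \<mu> x) - w \<nu> x * (\<Sum>\<rho>\<in>UNIV. x $ \<rho> * F \<mu> \<rho> x))"
    by (simp add: wedge21_def sum_distrib_left sum_distrib_right sum.distrib sum_subtractf algebra_simps)
  then show ?thesis by (simp add: w F1 F2)
qed

lemma radial_contraction_antisym: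
  fixes F :: "'n::finite \<Rightarrow> 'n \<Rightarrow> real^'n \<Rightarrow> real"
  assumes "\<And>\<mu> \<nu> y. F \<mu> \<nu> y = - F \<nu> \<mu> y"
    and "\<And>\<nu>. (\<Sum>\<rho>\<in>UNIV. y $ \<rho> * F \<rho> \<nu> y) = 0"
  shows "(\<Sum>\<rho>\<in>UNIV. y $ \<rho> * F \<nu> \<rho> y) = 0"
proof -
  have "(\<Sum>\<rho>\<in>UNIV. y $ \<rho> * F \<nu> \<rho> y) = - (\<Sum>\<rho>\<in>UNIV. y $ \<rho> * F \<rho> \<nu> y)"
    by (subst assms(1)) (simp add: sum_negf)
  then show ?thesis using assms(2) by simp
qed

lemma pd_radial_contraction:
  fixes w :: "'n::finite \<Rightarrow> real^'n \<Rightarrow> real"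
  assumes S: "\<And>\<nu>. smooth_fn (w \<nu>)"
  shows "pd \<mu> (\<lambda>y. \<Sum>\<nu>\<in>UNIV. y $ \<nu> * w \<nu> y) x = w \<mu> x + (\<Sum>\<nu>\<in>UNIV. x $ \<nu> * pd \<mu> (w \<nu>) x)"
proof -
  have "pd \<mu> (\<lambda>y. \<Sum>\<nu>\<in>UNIV. y $ \<nu> * w \<nu> y) x = (\<Sum>\<nu>\<in>UNIV. pd \<mu> (\<lambda>y. y $ \<nu> * w \<nu> y) x)"
    by (rule pd_sum) (simp_all add: smooth_fn_differentiable smooth_fn_mult smooth_fn_coord S)
  also have "\<dots> = (\<Sum>\<nu>\<in>UNIV. (if \<mu> = \<nu> then 1 else 0) * w \<nu> x + x $ \<nu> * pd \<mu> (w \<nu>) x)"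
  proof (rule sum.cong[OF refl])
    fix \<nu>
    show "pd \<mu> (\<lambda>y. y $ \<nu> * w \<nu> y) x = (if \<mu> = \<nu> then 1 else 0) * w \<nu> x + x $ \<nu> * pd \<mu> (w \<nu>) x"
      by (subst pd_mult) (rule smooth_fn_differentiable, rule smooth_fn_coord,
          rule smooth_fn_differentiable, rule S, simp add: pd_coord)
  qed
  also have "\<dots> = w \<mu> x + (\<Sum>\<nu>\<in>UNIV. x $ \<nu> * pd \<mu> (w \<nu>) x)"
  proof -
    have "(\<Sum>\<nu>\<in>UNIV. (if \<mu> = \<nu> then 1 else 0) * w \<nu> x) = w \<mu> x"
      by (simp add: if_distrib[of "\<lambda>c. c * _"] cong: if_cong)
    then show ?thesis by (simp add: sum.distrib)
  qed
  finally show ?thesis .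
qed

lemma radial_contraction_pd:
  fixes w :: "'n::finite \<Rightarrow> real^'n \<Rightarrow> real"
  assumes S: "\<And>\<nu>. smooth_fn (w \<nu>)" and Z: "\<And>y. (\<Sum>\<nu>\<in>UNIV. y $ \<nu> * w \<nu> y) = 0"
  shows "(\<Sum>\<nu>\<in>UNIV. x $ \<nu> * pd \<mu> (w \<nu>) x) = - w \<mu> x"
proof -
  have "(\<lambda>y. \<Sum>\<nu>\<in>UNIV. y $ \<nu> * w \<nu> y) = (\<lambda>y. 0)" using Z by (simp add: fun_eq_iff)
  then have "pd \<mu> (\<lambda>y. \<Sum>\<nu>\<in>UNIV. y $ \<nu> * w \<nu> y) x = 0" by (simp add: pd_const)
  then show ?thesis unfolding pd_radial_contraction[OF S] by linarith
qed

text \<open>Cartan's formula: when \<open>i\<^sub>x F = 0\<close>, the contraction \<open>i\<^sub>x dF\<close> is the Lie derivative of the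
  2-form \<open>F\<close> along the radial field, that is \<open>euler_op 2\<close> applied to its components.\<close>

lemma radial_contraction_dform2:
  fixes D :: "'n::finite \<Rightarrow> 'n \<Rightarrow> real^'n \<Rightarrow> real"
  assumes S: "\<And>\<mu> \<nu>. smooth_fn (D \<mu> \<nu>)"
    and A: "\<And>\<mu> \<nu> y. D \<mu> \<nu> y = - D \<nu> \<mu> y"
    and Z: "\<And>\<nu> y. (\<Sum>\<rho>\<in>UNIV. y $ \<rho> * D \<rho> \<nu> y) = 0"
  shows "(\<Sum>\<rho>\<in>UNIV. x $ \<rho> * dform2 D \<rho> \<mu> \<nu> x) = euler_op 2 (D \<mu> \<nu>) x"
proof -
  have Z': "\<And>\<nu> y. (\<Sum>\<rho>\<in>UNIV. y $ \<rho> * D \<nu> \<rho> y) = 0"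
    by (rule radial_contraction_antisym[OF A Z])
  have Af: "D \<nu> \<mu> = (\<lambda>y. - D \<mu> \<nu> y)" for \<mu> \<nu> by (rule ext) (rule A)
  have pdA: "pd \<rho> (D \<nu> \<mu>) y = - pd \<rho> (D \<mu> \<nu>) y" for \<rho> \<mu> \<nu> y
    unfolding Af[of \<nu> \<mu>] by (rule pd_minus) (rule smooth_fn_differentiable[OF S])
  have c1: "(\<Sum>\<rho>\<in>UNIV. x $ \<rho> * pd \<mu> (D \<nu> \<rho>) x) = - D \<nu> \<mu> x" for \<mu> \<nu>
    by (rule radial_contraction_pd[where w="\<lambda>\<rho>. D \<nu> \<rho>", OF S Z'])
  have c2: "(\<Sum>\<rho>\<in>UNIV. x $ \<rho> * pd \<mu> (D \<rho> \<nu>) x) = - D \<mu> \<nu> x" for \<mu> \<nu>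
    by (rule radial_contraction_pd[where w="\<lambda>\<rho>. D \<rho> \<nu>", OF S Z])
  have p: "(\<Sum>\<rho>\<in>UNIV. x $ \<rho> * pd \<rho> (D \<nu> \<mu>) x) = - (\<Sum>\<rho>\<in>UNIV. x $ \<rho> * pd \<rho> (D \<mu> \<nu>) x)"
    by (simp add: pdA[of _ \<nu> \<mu>] sum_negf)
  have "(\<Sum>\<rho>\<in>UNIV. x $ \<rho> * dform2 D \<rho> \<mu> \<nu> x) = (1/2) * (
      (\<Sum>\<rho>\<in>UNIV. x $ \<rho> * pd \<rho> (D \<mu> \<nu>) x) - (\<Sum>\<rho>\<in>UNIV. x $ \<rho> * pd \<rho> (D \<nu> \<mu>) x)
    + (\<Sum>\<rho>\<in>UNIV. x $ \<rho> * pd \<mu> (D \<nu> \<rho>) x) - (\<Sum>\<rho>\<in>UNIV. x $ \<rho> * pd \<mu> (D \<rho> \<nu>) x)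
    + (\<Sum>\<rho>\<in>UNIV. x $ \<rho> * pd \<nu> (D \<rho> \<mu>) x) - (\<Sum>\<rho>\<in>UNIV. x $ \<rho> * pd \<nu> (D \<mu> \<rho>) x))"
    by (simp add: dform2_def sum_distrib_left sum.distrib sum_subtractf algebra_simps)
  also have "\<dots> = euler_op 2 (D \<mu> \<nu>) x"
    unfolding c1 c2 p euler_op_def using A[of \<nu> \<mu> x] by (simp add: algebra_simps)
  finally show ?thesis .
qed

lemma radial_two_form_eq_0:
  fixes F :: "'n::finite \<Rightarrow> 'n \<Rightarrow> real^'n \<Rightarrow> real"
  assumes S: "\<And>\<mu> \<nu>. smooth_fn (F \<mu> \<nu>)"
    and A: "\<And>\<mu> \<nu> y. F \<mu> \<nu> y = - F \<nu> \<mu> y"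
    and Z: "\<And>\<nu> y. (\<Sum>\<rho>\<in>UNIV. y $ \<rho> * F \<rho> \<nu> y) = 0"
    and dZ: "\<And>\<mu> \<nu> y. (\<Sum>\<rho>\<in>UNIV. y $ \<rho> * dform2 F \<rho> \<mu> \<nu> y) = 0"
  shows "F \<mu> \<nu> x = 0"
proof (rule euler_op_eq_0_imp_eq_0[OF S, of 2])
  show "euler_op 2 (F \<mu> \<nu>) y = 0" for y
    using radial_contraction_dform2[OF S A Z, of y \<mu> \<nu>] dZ[of y \<mu> \<nu>] by simp
qed simp

lemma euler_op_fock_schwinger:
  assumes S: "\<And>a b \<mu>. smooth_fn (\<omega> a b \<mu>)"
    and FS: "\<And>a b y. (\<Sum>\<mu>\<in>UNIV. y $ \<mu> * \<omega> a b \<mu> y) = 0"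
  shows "euler_op 1 (\<omega> a b \<mu>) x = (\<Sum>\<nu>\<in>UNIV. x $ \<nu> * curv \<omega> a b \<nu> \<mu> x)"
proof -
  have "(\<Sum>\<nu>\<in>UNIV. x $ \<nu> * (\<Sum>c\<in>UNIV. wedge11 (\<omega> a c) (\<omega> c b) \<nu> \<mu> x)) = 0"
    unfolding sum_mult_sum_swap radial_contraction_wedge11 by (simp add: FS)
  moreover have "(\<Sum>\<nu>\<in>UNIV. x $ \<nu> * curv \<omega> a b \<nu> \<mu> x) =
     (\<Sum>\<nu>\<in>UNIV. x $ \<nu> * pd \<nu> (\<omega> a b \<mu>) x) - (\<Sum>\<nu>\<in>UNIV. x $ \<nu> * pd \<mu> (\<omega> a b \<nu>) x)
     + (\<Sum>\<nu>\<in>UNIV. x $ \<nu> * (\<Sum>c\<in>UNIV. wedge11 (\<omega> a c) (\<omega> c b) \<nu> \<mu> x))"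
    by (simp add: curv_def dform1_def algebra_simps sum.distrib sum_subtractf)
  moreover have "(\<Sum>\<nu>\<in>UNIV. x $ \<nu> * pd \<mu> (\<omega> a b \<nu>) x) = - \<omega> a b \<mu> x"
    by (rule radial_contraction_pd[OF S FS])
  ultimately show ?thesis by (simp add: euler_op_def)
qed

section \<open>Exterior calculus\<close>

lemma pd_dform1:
  assumes S: "\<And>\<nu>. smooth_fn (w \<nu>)"
  shows "pd \<mu> (dform1 w \<nu> \<rho>) x = pd \<mu> (pd \<nu> (w \<rho>)) x - pd \<mu> (pd \<rho> (w \<nu>)) x"
  unfolding dform1_eq by (rule pd_diff) (intro smooth_fn_differentiable smooth_fn_pd S)+

lemma pd_wedge11:
  assumes S: "\<And>\<nu>. smooth_fn (w \<nu>)" "\<And>\<nu>. smooth_fn (s \<nu>)"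
  shows "pd \<mu> (wedge11 w s \<nu> \<rho>) x = (pd \<mu> (w \<nu>) x * s \<rho> x + w \<nu> x * pd \<mu> (s \<rho>) x)
      - (pd \<mu> (w \<rho>) x * s \<nu> x + w \<rho> x * pd \<mu> (s \<nu>) x)"
proof -
  have "pd \<mu> (wedge11 w s \<nu> \<rho>) x = pd \<mu> (\<lambda>y. w \<nu> y * s \<rho> y) x - pd \<mu> (\<lambda>y. w \<rho> y * s \<nu> y) x"
    unfolding wedge11_eq by (rule pd_diff) (intro smooth_fn_differentiable smooth_fn_mult S)+
  also have "\<dots> = (pd \<mu> (w \<nu>) x * s \<rho> x + w \<nu> x * pd \<mu> (s \<rho>) x)
      - (pd \<mu> (w \<rho>) x * s \<nu> x + w \<rho> x * pd \<mu> (s \<nu>) x)"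
    by (subst pd_mult, (intro smooth_fn_differentiable S)+)+ simp
  finally show ?thesis .
qed

lemma dform2_dform1_eq_0:
  assumes S: "\<And>\<nu>. smooth_fn (w \<nu>)"
  shows "dform2 (dform1 w) \<mu> \<nu> \<rho> x = 0"
proof -
  have s1: "pd \<mu> (pd \<nu> (w \<rho>)) x = pd \<nu> (pd \<mu> (w \<rho>)) x" by (rule pd_pd_commute[OF S])
  have s2: "pd \<mu> (pd \<rho> (w \<nu>)) x = pd \<rho> (pd \<mu> (w \<nu>)) x" by (rule pd_pd_commute[OF S])
  have s3: "pd \<nu> (pd \<rho> (w \<mu>)) x = pd \<rho> (pd \<nu> (w \<mu>)) x" by (rule pd_pd_commute[OF S])
  show ?thesis unfolding dform2_def pd_dform1[OF S] using s1 s2 s3 by simp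
qed

lemma dform2_wedge11:
  assumes S: "\<And>\<nu>. smooth_fn (w \<nu>)" "\<And>\<nu>. smooth_fn (s \<nu>)"
  shows "dform2 (wedge11 w s) \<mu> \<nu> \<rho> x = wedge21 (dform1 w) s \<mu> \<nu> \<rho> x - wedge12 w (dform1 s) \<mu> \<nu> \<rho> x"
  unfolding dform2_def pd_wedge11[OF S] wedge21_def wedge12_def dform1_def
  by (simp add: algebra_simps)

lemma wedge12_wedge11: "wedge12 w (wedge11 u v) \<mu> \<nu> \<rho> x = wedge21 (wedge11 w u) v \<mu> \<nu> \<rho> x"
  by (simp add: wedge12_def wedge21_def wedge11_def algebra_simps)

lemma dform2_add:
  assumes "\<And>\<alpha> \<beta>. smooth_fn (F \<alpha> \<beta>)" "\<And>\<alpha> \<beta>. smooth_fn (G \<alpha> \<beta>)"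
  shows "dform2 (\<lambda>\<alpha> \<beta> y. F \<alpha> \<beta> y + G \<alpha> \<beta> y) \<mu> \<nu> \<rho> x = dform2 F \<mu> \<nu> \<rho> x + dform2 G \<mu> \<nu> \<rho> x"
proof -
  have p: "pd i (\<lambda>y. F \<alpha> \<beta> y + G \<alpha> \<beta> y) x = pd i (F \<alpha> \<beta>) x + pd i (G \<alpha> \<beta>) x" for i \<alpha> \<beta>
    by (rule pd_add) (intro smooth_fn_differentiable assms)+
  show ?thesis unfolding dform2_def p by (simp add: algebra_simps)
qed

lemma dform2_diff:
  assumes "\<And>\<alpha> \<beta>. smooth_fn (F \<alpha> \<beta>)" "\<And>\<alpha> \<beta>. smooth_fn (G \<alpha> \<beta>)"
  shows "dform2 (\<lambda>\<alpha> \<beta> y. F \<alpha> \<beta> y - G \<alpha> \<beta> y) \<mu> \<nu> \<rho> x = dform2 F \<mu> \<nu> \<rho> x - dform2 G \<mu> \<nu> \<rho> x"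
proof -
  have p: "pd i (\<lambda>y. F \<alpha> \<beta> y - G \<alpha> \<beta> y) x = pd i (F \<alpha> \<beta>) x - pd i (G \<alpha> \<beta>) x" for i \<alpha> \<beta>
    by (rule pd_diff) (intro smooth_fn_differentiable assms)+
  show ?thesis unfolding dform2_def p by (simp add: algebra_simps)
qed

lemma dform2_sum:
  assumes "finite A" "\<And>c \<alpha> \<beta>. smooth_fn (F c \<alpha> \<beta>)"
  shows "dform2 (\<lambda>\<alpha> \<beta> y. \<Sum>c\<in>A. F c \<alpha> \<beta> y) \<mu> \<nu> \<rho> x = (\<Sum>c\<in>A. dform2 (F c) \<mu> \<nu> \<rho> x)"
proof -
  have p: "pd i (\<lambda>y. \<Sum>c\<in>A. F c \<alpha> \<beta> y) x = (\<Sum>c\<in>A. pd i (F c \<alpha> \<beta>) x)" for i \<alpha> \<beta>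
    by (rule pd_sum[OF assms(1)]) (intro smooth_fn_differentiable assms)+
  show ?thesis unfolding dform2_def p by (simp add: sum.distrib sum_subtractf sum_divide_distrib[symmetric])
qed

lemma wedge12_add: "wedge12 w (\<lambda>\<alpha> \<beta> y. F \<alpha> \<beta> y + G \<alpha> \<beta> y) \<mu> \<nu> \<rho> x = wedge12 w F \<mu> \<nu> \<rho> x + wedge12 w G \<mu> \<nu> \<rho> x"
  by (simp add: wedge12_def algebra_simps)

lemma wedge12_diff: "wedge12 w (\<lambda>\<alpha> \<beta> y. F \<alpha> \<beta> y - G \<alpha> \<beta> y) \<mu> \<nu> \<rho> x = wedge12 w F \<mu> \<nu> \<rho> x - wedge12 w G \<mu> \<nu> \<rho> x"
  by (simp add: wedge12_def algebra_simps)

lemma wedge21_add: "wedge21 (\<lambda>\<alpha> \<beta> y. F \<alpha> \<beta> y + G \<alpha> \<beta> y) w \<mu> \<nu> \<rho> x = wedge21 F w \<mu> \<nu> \<rho> x + wedge21 G w \<mu> \<nu> \<rho> x"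
  by (simp add: wedge21_def algebra_simps)

lemma wedge21_diff: "wedge21 (\<lambda>\<alpha> \<beta> y. F \<alpha> \<beta> y - G \<alpha> \<beta> y) w \<mu> \<nu> \<rho> x = wedge21 F w \<mu> \<nu> \<rho> x - wedge21 G w \<mu> \<nu> \<rho> x"
  by (simp add: wedge21_def algebra_simps)

lemma wedge12_sum: "wedge12 w (\<lambda>\<alpha> \<beta> y. \<Sum>c\<in>A. F c \<alpha> \<beta> y) \<mu> \<nu> \<rho> x = (\<Sum>c\<in>A. wedge12 w (F c) \<mu> \<nu> \<rho> x)"
  by (simp add: wedge12_def sum_distrib_left sum.distrib sum_subtractf sum_divide_distrib[symmetric])

lemma wedge21_sum: "wedge21 (\<lambda>\<alpha> \<beta> y. \<Sum>c\<in>A. F c \<alpha> \<beta> y) w \<mu> \<nu> \<rho> x = (\<Sum>c\<in>A. wedge21 (F c) w \<mu> \<nu> \<rho> x)"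
  by (simp add: wedge21_def sum_distrib_right sum.distrib sum_subtractf sum_divide_distrib[symmetric])

lemma curv_second_bianchi:
  assumes S: "\<And>a b \<mu>. smooth_fn (\<omega> a b \<mu>)"
  shows "dform2 (curv \<omega> a b) \<mu> \<nu> \<rho> x + (\<Sum>c\<in>UNIV. wedge12 (\<omega> a c) (curv \<omega> c b) \<mu> \<nu> \<rho> x)
           - (\<Sum>c\<in>UNIV. wedge21 (curv \<omega> a c) (\<omega> c b) \<mu> \<nu> \<rho> x) = 0"
proof -
  have d: "dform2 (curv \<omega> a b) \<mu> \<nu> \<rho> x =
      (\<Sum>d\<in>UNIV. wedge21 (dform1 (\<omega> a d)) (\<omega> d b) \<mu> \<nu> \<rho> x
      - wedge12 (\<omega> a d) (dform1 (\<omega> d b)) \<mu> \<nu> \<rho> x)"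
  proof -
    have "dform2 (curv \<omega> a b) \<mu> \<nu> \<rho> x = dform2 (dform1 (\<omega> a b)) \<mu> \<nu> \<rho> x
        + dform2 (\<lambda>\<alpha> \<beta> y. \<Sum>c\<in>UNIV. wedge11 (\<omega> a c) (\<omega> c b) \<alpha> \<beta> y) \<mu> \<nu> \<rho> x"
      unfolding curv_eq
      by (rule dform2_add) (intro smooth_dform1 smooth_fn_sum smooth_wedge11 S finite)+
    also have "dform2 (\<lambda>\<alpha> \<beta> y. \<Sum>c\<in>UNIV. wedge11 (\<omega> a c) (\<omega> c b) \<alpha> \<beta> y) \<mu> \<nu> \<rho> x
        = (\<Sum>c\<in>UNIV. dform2 (wedge11 (\<omega> a c) (\<omega> c b)) \<mu> \<nu> \<rho> x)"
      by (rule dform2_sum) (intro smooth_wedge11 S finite)+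
    finally show ?thesis by (simp add: dform2_dform1_eq_0[OF S] dform2_wedge11[OF S S])
  qed
  have w12: "(\<Sum>c\<in>UNIV. wedge12 (\<omega> a c) (curv \<omega> c b) \<mu> \<nu> \<rho> x) =
     (\<Sum>c\<in>UNIV. wedge12 (\<omega> a c) (dform1 (\<omega> c b)) \<mu> \<nu> \<rho> x)
         + (\<Sum>c\<in>UNIV. \<Sum>d\<in>UNIV. wedge21 (wedge11 (\<omega> a c) (\<omega> c d)) (\<omega> d b) \<mu> \<nu> \<rho> x)"
    unfolding curv_eq wedge12_add wedge12_sum wedge12_wedge11 by (simp add: sum.distrib)
  have w21: "(\<Sum>c\<in>UNIV. wedge21 (curv \<omega> a c) (\<omega> c b) \<mu> \<nu> \<rho> x) =
     (\<Sum>c\<in>UNIV. wedge21 (dform1 (\<omega> a c)) (\<omega> c b) \<mu> \<nu> \<rho> x)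
         + (\<Sum>c\<in>UNIV. \<Sum>d\<in>UNIV. wedge21 (wedge11 (\<omega> a d) (\<omega> d c)) (\<omega> c b) \<mu> \<nu> \<rho> x)"
    unfolding curv_eq wedge21_add wedge21_sum by (simp add: sum.distrib)
  have cub: "(\<Sum>c\<in>UNIV. \<Sum>d\<in>UNIV. wedge21 (wedge11 (\<omega> a d) (\<omega> d c)) (\<omega> c b) \<mu> \<nu> \<rho> x) =
     (\<Sum>c\<in>UNIV. \<Sum>d\<in>UNIV. wedge21 (wedge11 (\<omega> a c) (\<omega> c d)) (\<omega> d b) \<mu> \<nu> \<rho> x)"
    by (rule sum.swap)
  show ?thesis unfolding d w12 w21 cub by (simp add: sum_subtractf)
qed

lemma torsion_bianchi:
  assumes S: "\<And>a b \<mu>. smooth_fn (\<omega> a b \<mu>)" and Se: "\<And>a \<mu>. smooth_fn (e a \<mu>)"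
  defines "T \<equiv> \<lambda>a \<alpha> \<beta> y. dform1 (e a) \<alpha> \<beta> y + (\<Sum>b\<in>UNIV. wedge11 (\<omega> a b) (e b) \<alpha> \<beta> y)"
  shows "dform2 (T a) \<mu> \<nu> \<rho> x + (\<Sum>b\<in>UNIV. wedge12 (\<omega> a b) (T b) \<mu> \<nu> \<rho> x)
           = (\<Sum>b\<in>UNIV. wedge21 (curv \<omega> a b) (e b) \<mu> \<nu> \<rho> x)"
proof -
  have d: "dform2 (T a) \<mu> \<nu> \<rho> x =
      (\<Sum>b\<in>UNIV. wedge21 (dform1 (\<omega> a b)) (e b) \<mu> \<nu> \<rho> x
      - wedge12 (\<omega> a b) (dform1 (e b)) \<mu> \<nu> \<rho> x)"
  proof -
    have "dform2 (T a) \<mu> \<nu> \<rho> x = dform2 (dform1 (e a)) \<mu> \<nu> \<rho> x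
        + dform2 (\<lambda>\<alpha> \<beta> y. \<Sum>b\<in>UNIV. wedge11 (\<omega> a b) (e b) \<alpha> \<beta> y) \<mu> \<nu> \<rho> x"
      unfolding T_def
      by (rule dform2_add) (intro smooth_dform1 smooth_fn_sum smooth_wedge11 S Se finite)+
    also have "dform2 (\<lambda>\<alpha> \<beta> y. \<Sum>b\<in>UNIV. wedge11 (\<omega> a b) (e b) \<alpha> \<beta> y) \<mu> \<nu> \<rho> x
        = (\<Sum>b\<in>UNIV. dform2 (wedge11 (\<omega> a b) (e b)) \<mu> \<nu> \<rho> x)"
      by (rule dform2_sum) (intro smooth_wedge11 S Se finite)+
    finally show ?thesis by (simp add: dform2_dform1_eq_0[OF Se] dform2_wedge11[OF S Se])
  qed
  have w12: "(\<Sum>b\<in>UNIV. wedge12 (\<omega> a b) (T b) \<mu> \<nu> \<rho> x) =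
     (\<Sum>b\<in>UNIV. wedge12 (\<omega> a b) (dform1 (e b)) \<mu> \<nu> \<rho> x)
         + (\<Sum>b\<in>UNIV. \<Sum>c\<in>UNIV. wedge21 (wedge11 (\<omega> a b) (\<omega> b c)) (e c) \<mu> \<nu> \<rho> x)"
    unfolding T_def wedge12_add wedge12_sum wedge12_wedge11 by (simp add: sum.distrib)
  have r: "(\<Sum>b\<in>UNIV. wedge21 (curv \<omega> a b) (e b) \<mu> \<nu> \<rho> x) =
     (\<Sum>b\<in>UNIV. wedge21 (dform1 (\<omega> a b)) (e b) \<mu> \<nu> \<rho> x)
         + (\<Sum>b\<in>UNIV. \<Sum>c\<in>UNIV. wedge21 (wedge11 (\<omega> a c) (\<omega> c b)) (e b) \<mu> \<nu> \<rho> x)"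
    unfolding curv_eq wedge21_add wedge21_sum by (simp add: sum.distrib)
  have cub: "(\<Sum>b\<in>UNIV. \<Sum>c\<in>UNIV. wedge21 (wedge11 (\<omega> a c) (\<omega> c b)) (e b) \<mu> \<nu> \<rho> x) =
     (\<Sum>b\<in>UNIV. \<Sum>c\<in>UNIV. wedge21 (wedge11 (\<omega> a b) (\<omega> b c)) (e c) \<mu> \<nu> \<rho> x)"
    by (rule sum.swap)
  show ?thesis unfolding d w12 r cub by (simp add: sum_subtractf)
qed

lemma curv_antisym_coord: "curv \<omega> a b \<mu> \<nu> x = - curv \<omega> a b \<nu> \<mu> x"
  by (simp add: curv_def dform1_def wedge11_def sum_subtractf sum_negf)

lemma curv_antisym_frame:
  assumes S: "\<And>a b \<mu>. smooth_fn (\<omega> a b \<mu>)" and AS: "\<And>a b \<mu> x. \<omega> a b \<mu> x = - \<omega> b a \<mu> x"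
  shows "curv \<omega> a b \<mu> \<nu> x = - curv \<omega> b a \<mu> \<nu> x"
proof -
  have f: "\<omega> b a \<sigma> = (\<lambda>y. - \<omega> a b \<sigma> y)" for \<sigma> by (rule ext) (rule AS)
  have p: "pd \<tau> (\<omega> b a \<sigma>) x = - pd \<tau> (\<omega> a b \<sigma>) x" for \<tau> \<sigma>
    unfolding f by (rule pd_minus) (rule smooth_fn_differentiable[OF S])
  have q: "(\<Sum>c\<in>UNIV. wedge11 (\<omega> b c) (\<omega> c a) \<mu> \<nu> x) = - (\<Sum>c\<in>UNIV. wedge11 (\<omega> a c) (\<omega> c b) \<mu> \<nu> x)"
  proof -
    have "wedge11 (\<omega> b c) (\<omega> c a) \<mu> \<nu> x = - wedge11 (\<omega> a c) (\<omega> c b) \<mu> \<nu> x" for c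
    proof -
      have "\<omega> b c \<mu> x = - \<omega> c b \<mu> x" "\<omega> b c \<nu> x = - \<omega> c b \<nu> x"
           "\<omega> c a \<mu> x = - \<omega> a c \<mu> x" "\<omega> c a \<nu> x = - \<omega> a c \<nu> x" by (rule AS)+
      then show ?thesis by (simp add: wedge11_def algebra_simps)
    qed
    then show ?thesis by (simp add: sum_negf)
  qed
  show ?thesis unfolding curv_def dform1_def p q by simp
qed

lemma dform2_zero: "dform2 (\<lambda>\<alpha> \<beta> y. 0) \<mu> \<nu> \<rho> x = 0"
  by (simp add: dform2_def pd_const)

lemma wedge12_zero: "wedge12 w (\<lambda>\<alpha> \<beta> y. 0) \<mu> \<nu> \<rho> x = 0"
  by (simp add: wedge12_def)

lemma conn_spaceD:
  assumes "\<omega> \<in> conn_space"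
  shows "smooth_fn (\<omega> a b \<mu>)" and "\<omega> a b \<mu> x = - \<omega> b a \<mu> x"
    and "(\<Sum>\<mu>\<in>UNIV. x $ \<mu> * \<omega> a b \<mu> x) = 0"
    and "dform1 (vielbein_w \<omega> a) \<mu> \<nu> x + (\<Sum>b\<in>UNIV. wedge11 (\<omega> a b) (vielbein_w \<omega> b) \<mu> \<nu> x) = 0"
  using assms[unfolded conn_space_def mem_Collect_eq] by fast+

lemma conn_of_curv:
  assumes S: "\<And>a b \<mu>. smooth_fn (\<omega> a b \<mu>)"
    and FS: "\<And>a b y. (\<Sum>\<mu>\<in>UNIV. y $ \<mu> * \<omega> a b \<mu> y) = 0"
  shows "conn_of (curv \<omega>) = \<omega>"
proof (intro ext)
  fix a b \<mu> x
  have SF: "\<And>a b \<mu> \<nu>. smooth_fn (curv \<omega> a b \<mu> \<nu>)" by (rule smooth_curv[where \<omega>=\<omega>, OF S])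
  show "conn_of (curv \<omega>) a b \<mu> x = \<omega> a b \<mu> x"
  proof (rule euler_op_inject[of _ _ 1])
    show "euler_op 1 (conn_of (curv \<omega>) a b \<mu>) y = euler_op 1 (\<omega> a b \<mu>) y" for y
      using euler_op_conn_of[where R="curv \<omega>", OF SF] euler_op_fock_schwinger[where \<omega>=\<omega>, OF S FS] by simp
  qed (simp_all add: smooth_conn_of SF S)
qed

lemma curv_mem_curv_space:
  assumes "\<omega> \<in> conn_space"
  shows "curv \<omega> \<in> curv_space"
proof -
  note S = conn_spaceD(1)[OF assms] and AS = conn_spaceD(2)[OF assms]
    and FS = conn_spaceD(3)[OF assms] and torsion_free = conn_spaceD(4)[OF assms]
  have C: "conn_of (curv \<omega>) = \<omega>" by (rule conn_of_curv[where \<omega>=\<omega>, OF S FS])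
  have SF: "\<And>a b \<mu> \<nu>. smooth_fn (curv \<omega> a b \<mu> \<nu>)" by (rule smooth_curv[where \<omega>=\<omega>, OF S])
  have V: "vielbein_R (curv \<omega>) = vielbein_w \<omega>"
    using vielbein_R_eq_vielbein_w_conn_of[where R="curv \<omega>", OF SF] C by simp
  have T0: "(\<lambda>\<alpha> \<beta> y. dform1 (vielbein_w \<omega> a) \<alpha> \<beta> y +
      (\<Sum>b\<in>UNIV. wedge11 (\<omega> a b) (vielbein_w \<omega> b) \<alpha> \<beta> y)) = (\<lambda>\<alpha> \<beta> y. 0)" for a
    by (intro ext) (rule torsion_free)
  have first_bianchi: "(\<Sum>b\<in>UNIV. wedge21 (curv \<omega> a b) (vielbein_R (curv \<omega>) b) \<mu> \<nu> \<rho> x) = 0"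
    for a \<mu> \<nu> \<rho> x
    using torsion_bianchi[where \<omega>=\<omega> and e="vielbein_w \<omega>",
        OF S smooth_vielbein_w[where \<omega>=\<omega>, OF S],
        where a=a and \<mu>=\<mu> and \<nu>=\<nu> and \<rho>=\<rho> and x=x]
    unfolding V T0 by (simp add: dform2_zero wedge12_zero)
  have second_bianchi: "dform2 (curv \<omega> a b) \<mu> \<nu> \<rho> x
      + (\<Sum>c\<in>UNIV. wedge12 (conn_of (curv \<omega>) a c) (curv \<omega> c b) \<mu> \<nu> \<rho> x)
      - (\<Sum>c\<in>UNIV. wedge21 (curv \<omega> a c) (conn_of (curv \<omega>) c b) \<mu> \<nu> \<rho> x) = 0" for a b \<mu> \<nu> \<rho> x
    unfolding C by (rule curv_second_bianchi[where \<omega>=\<omega>, OF S])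
  show ?thesis
    unfolding curv_space_def mem_Collect_eq
    by (intro conjI allI SF curv_antisym_frame[where \<omega>=\<omega>, OF S AS] curv_antisym_coord
        first_bianchi second_bianchi)
qed

lemma curv_spaceD:
  assumes "R \<in> curv_space"
  shows "smooth_fn (R a b \<mu> \<nu>)" and "R a b \<mu> \<nu> x = - R b a \<mu> \<nu> x"
    and "R a b \<mu> \<nu> x = - R a b \<nu> \<mu> x"
    and "(\<Sum>b\<in>UNIV. wedge21 (R a b) (vielbein_R R b) \<mu> \<nu> \<rho> x) = 0"
    and "dform2 (R a b) \<mu> \<nu> \<rho> x + (\<Sum>c\<in>UNIV. wedge12 (conn_of R a c) (R c b) \<mu> \<nu> \<rho> x)
           - (\<Sum>c\<in>UNIV. wedge21 (R a c) (conn_of R c b) \<mu> \<nu> \<rho> x) = 0"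
  using assms[unfolded curv_space_def mem_Collect_eq] by fast+

lemma quadratic_form_antisym_eq_0:
  fixes A :: "'n::finite \<Rightarrow> 'n \<Rightarrow> real"
  assumes A: "\<And>\<mu> \<nu>. A \<nu> \<mu> = - A \<mu> \<nu>"
  shows "(\<Sum>\<mu>\<in>UNIV. \<Sum>\<nu>\<in>UNIV. x $ \<mu> * x $ \<nu> * A \<nu> \<mu>) = 0"
proof -
  have "(\<Sum>\<mu>\<in>UNIV. \<Sum>\<nu>\<in>UNIV. x $ \<mu> * x $ \<nu> * A \<nu> \<mu>) = (\<Sum>\<nu>\<in>UNIV. \<Sum>\<mu>\<in>UNIV. x $ \<mu> * x $ \<nu> * A \<nu> \<mu>)"
    by (rule sum.swap)
  also have "\<dots> = (\<Sum>\<nu>\<in>UNIV. \<Sum>\<mu>\<in>UNIV. - (x $ \<nu> * x $ \<mu> * A \<mu> \<nu>))"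
  proof (intro sum.cong refl)
    fix \<nu> \<mu>
    show "x $ \<mu> * x $ \<nu> * A \<nu> \<mu> = - (x $ \<nu> * x $ \<mu> * A \<mu> \<nu>)"
      using A[of \<mu> \<nu>] by (simp add: mult.commute)
  qed
  also have "\<dots> = - (\<Sum>\<nu>\<in>UNIV. \<Sum>\<mu>\<in>UNIV. x $ \<nu> * x $ \<mu> * A \<mu> \<nu>)"
    by (simp add: sum_negf)
  finally show ?thesis by simp
qed

lemma conn_of_antisym:
  assumes AS: "\<And>a b \<mu> \<nu> x. R a b \<mu> \<nu> x = - R b a \<mu> \<nu> x"
  shows "conn_of R a b \<mu> x = - conn_of R b a \<mu> x"
proof -
  have "(\<lambda>t. t * (\<Sum>\<nu>\<in>UNIV. x $ \<nu> * R b a \<nu> \<mu> (t *\<^sub>R x))) =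
      (\<lambda>t. - (t * (\<Sum>\<nu>\<in>UNIV. x $ \<nu> * R a b \<nu> \<mu> (t *\<^sub>R x))))"
    by (rule ext) (simp add: AS[of b a] sum_negf)
  then show ?thesis unfolding conn_of_def by simp
qed

lemma radial_contraction_conn_of:
  assumes S: "\<And>a b \<mu> \<nu>. smooth_fn (R a b \<mu> \<nu>)"
    and AS: "\<And>a b \<mu> \<nu> x. R a b \<mu> \<nu> x = - R a b \<nu> \<mu> x"
  shows "(\<Sum>\<mu>\<in>UNIV. x $ \<mu> * conn_of R a b \<mu> x) = 0"
proof -
  have "(\<Sum>\<mu>\<in>UNIV. x $ \<mu> * (t * (\<Sum>\<nu>\<in>UNIV. x $ \<nu> * R a b \<nu> \<mu> (t *\<^sub>R x)))) =
      t * (\<Sum>\<mu>\<in>UNIV. \<Sum>\<nu>\<in>UNIV. x $ \<mu> * x $ \<nu> * R a b \<nu> \<mu> (t *\<^sub>R x))" for t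
    by (simp add: sum_distrib_left mult_ac)
  moreover have "(\<Sum>\<mu>\<in>UNIV. \<Sum>\<nu>\<in>UNIV. x $ \<mu> * x $ \<nu> * R a b \<nu> \<mu> (t *\<^sub>R x)) = 0" for t
    by (rule quadratic_form_antisym_eq_0) (rule AS)
  ultimately show ?thesis
    unfolding conn_of_def
    by (subst sum_coord_mult_integral) (simp_all add: continuous_intros continuous_on_ray S)
qed

lemma radial_contraction_vielbein_w_dev:
  assumes S: "\<And>a b \<mu>. smooth_fn (\<omega> a b \<mu>)"
    and FS: "\<And>a b y. (\<Sum>\<mu>\<in>UNIV. y $ \<mu> * \<omega> a b \<mu> y) = 0"
  shows "(\<Sum>\<rho>\<in>UNIV. y $ \<rho> * vielbein_w_dev \<omega> c \<rho> y) = 0"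
proof -
  have FS_ray: "t * (\<Sum>\<rho>\<in>UNIV. y $ \<rho> * \<omega> c b \<rho> (t *\<^sub>R y)) = 0" for t b
    using FS[where a=c and b=b and y="t *\<^sub>R y"] by (simp add: sum_distrib_left mult_ac)
  have "(\<Sum>\<rho>\<in>UNIV. y $ \<rho> * (\<Sum>b\<in>UNIV. \<omega> c b \<rho> (t *\<^sub>R y) * t * y $ b)) =
      (\<Sum>b\<in>UNIV. y $ b * (t * (\<Sum>\<rho>\<in>UNIV. y $ \<rho> * \<omega> c b \<rho> (t *\<^sub>R y))))" for t
  proof -
    have "(\<Sum>\<rho>\<in>UNIV. y $ \<rho> * (\<Sum>b\<in>UNIV. \<omega> c b \<rho> (t *\<^sub>R y) * t * y $ b)) =
        (\<Sum>b\<in>UNIV. \<Sum>\<rho>\<in>UNIV. y $ \<rho> * (\<omega> c b \<rho> (t *\<^sub>R y) * t * y $ b))"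
      by (rule sum_mult_sum_swap)
    also have "\<dots> = (\<Sum>b\<in>UNIV. y $ b * (t * (\<Sum>\<rho>\<in>UNIV. y $ \<rho> * \<omega> c b \<rho> (t *\<^sub>R y))))"
      by (simp add: sum_distrib_left mult_ac)
    finally show ?thesis .
  qed
  then show ?thesis
    unfolding vielbein_w_dev_def FS_ray
    by (subst sum_coord_mult_integral) (simp_all add: continuous_intros continuous_on_ray S)
qed

lemma radial_contraction_vielbein_w:
  assumes S: "\<And>a b \<mu>. smooth_fn (\<omega> a b \<mu>)"
    and FS: "\<And>a b y. (\<Sum>\<mu>\<in>UNIV. y $ \<mu> * \<omega> a b \<mu> y) = 0"
  shows "(\<Sum>\<rho>\<in>UNIV. y $ \<rho> * vielbein_w \<omega> c \<rho> y) = y $ c"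
  unfolding vielbein_w_eq distrib_left sum.distrib radial_contraction_vielbein_w_dev[OF S FS]
  by (simp add: if_distrib cong: if_cong)

lemma radial_contraction_covariant_wedges:
  assumes FS: "\<And>a b y. (\<Sum>\<mu>\<in>UNIV. y $ \<mu> * \<omega> a b \<mu> y) = 0"
    and Z1: "\<And>c d \<nu>. (\<Sum>\<rho>\<in>UNIV. y $ \<rho> * D c d \<rho> \<nu> y) = 0"
    and Z2: "\<And>c d \<nu>. (\<Sum>\<rho>\<in>UNIV. y $ \<rho> * D c d \<nu> \<rho> y) = 0"
  shows "(\<Sum>\<rho>\<in>UNIV. y $ \<rho> * ((\<Sum>c\<in>UNIV. wedge21 (D a c) (\<omega> c b) \<rho> \<mu> \<nu> y)
    - (\<Sum>c\<in>UNIV. wedge12 (\<omega> a c) (D c b) \<rho> \<mu> \<nu> y))) = 0"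
proof -
  have "(\<Sum>\<rho>\<in>UNIV. y $ \<rho> * wedge21 (D a c) (\<omega> c b) \<rho> \<mu> \<nu> y) = 0" for c
    by (rule radial_contraction_wedge21) (rule FS, rule Z1, rule Z2)
  moreover have "(\<Sum>\<rho>\<in>UNIV. y $ \<rho> * wedge12 (\<omega> a c) (D c b) \<rho> \<mu> \<nu> y) = 0" for c
    by (rule radial_contraction_wedge12) (rule FS, rule Z1, rule Z2)
  ultimately show ?thesis
    unfolding right_diff_distrib sum_subtractf sum_mult_sum_swap by simp
qed

text \<open>With \<open>\<omega> = conn_of R\<close>, both \<open>i\<^sub>x R\<close> and \<open>i\<^sub>x (curv \<omega>)\<close> equal \<open>euler_op 1 \<omega>\<close>, so
  \<open>D = R - curv \<omega>\<close> has \<open>i\<^sub>x D = 0\<close>; the two second Bianchi identities give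
  \<open>dD = D \<and> \<omega> - \<omega> \<and> D\<close>, whose contraction with \<open>x\<close> vanishes.\<close>

lemma curv_conn_of:
  assumes SR: "\<And>a b \<mu> \<nu>. smooth_fn (R a b \<mu> \<nu>)"
    and ASmn: "\<And>a b \<mu> \<nu> x. R a b \<mu> \<nu> x = - R a b \<nu> \<mu> x"
    and B2R: "\<And>a b \<mu> \<nu> \<rho> x. dform2 (R a b) \<mu> \<nu> \<rho> x
         + (\<Sum>c\<in>UNIV. wedge12 (conn_of R a c) (R c b) \<mu> \<nu> \<rho> x)
         - (\<Sum>c\<in>UNIV. wedge21 (R a c) (conn_of R c b) \<mu> \<nu> \<rho> x) = 0"
  shows "curv (conn_of R) = R"
proof -
  define \<omega> where "\<omega> = conn_of R"
  have S: "\<And>a b \<mu>. smooth_fn (\<omega> a b \<mu>)"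
    unfolding \<omega>_def by (rule smooth_conn_of[where R=R, OF SR])
  have FS: "\<And>a b y. (\<Sum>\<mu>\<in>UNIV. y $ \<mu> * \<omega> a b \<mu> y) = 0"
    unfolding \<omega>_def by (rule radial_contraction_conn_of[where R=R, OF SR ASmn])
  have SF: "\<And>a b \<mu> \<nu>. smooth_fn (curv \<omega> a b \<mu> \<nu>)" by (rule smooth_curv[where \<omega>=\<omega>, OF S])
  define D where "D = (\<lambda>c d \<alpha> \<beta> y. R c d \<alpha> \<beta> y - curv \<omega> c d \<alpha> \<beta> y)"
  have SD: "\<And>c d \<alpha> \<beta>. smooth_fn (D c d \<alpha> \<beta>)" unfolding D_def by (intro smooth_fn_diff SR SF)
  have AD: "D c d \<alpha> \<beta> y = - D c d \<beta> \<alpha> y" for c d \<alpha> \<beta> y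
    unfolding D_def using ASmn[of c d \<alpha> \<beta> y] curv_antisym_coord[of \<omega> c d \<alpha> \<beta> y] by simp
  have Z1: "(\<Sum>\<rho>\<in>UNIV. y $ \<rho> * D c d \<rho> \<nu> y) = 0" for c d \<nu> y
    using euler_op_conn_of[where R=R, OF SR, of c d \<nu> y]
      euler_op_fock_schwinger[where \<omega>=\<omega>, OF S FS, of c d \<nu> y]
    unfolding D_def \<omega>_def by (simp add: algebra_simps sum_subtractf)
  have Z2: "(\<Sum>\<rho>\<in>UNIV. y $ \<rho> * D c d \<nu> \<rho> y) = 0" for c d \<nu> y
    by (rule radial_contraction_antisym[OF AD Z1])
  have dD: "dform2 (D a b) \<rho> \<mu> \<nu> y = (\<Sum>c\<in>UNIV. wedge21 (D a c) (\<omega> c b) \<rho> \<mu> \<nu> y)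
      - (\<Sum>c\<in>UNIV. wedge12 (\<omega> a c) (D c b) \<rho> \<mu> \<nu> y)" for a b \<rho> \<mu> \<nu> y
  proof -
    have "dform2 (D a b) \<rho> \<mu> \<nu> y = dform2 (R a b) \<rho> \<mu> \<nu> y - dform2 (curv \<omega> a b) \<rho> \<mu> \<nu> y"
      unfolding D_def by (rule dform2_diff) (intro SR SF)+
    then show ?thesis
      using B2R[of a b \<rho> \<mu> \<nu> y] curv_second_bianchi[where \<omega>=\<omega>, OF S, of a b \<rho> \<mu> \<nu> y]
      unfolding D_def \<omega>_def wedge12_diff wedge21_diff by (simp add: sum_subtractf)
  qed
  have "D a b \<mu> \<nu> x = 0" for a b \<mu> \<nu> x
  proof (rule radial_two_form_eq_0[OF SD AD Z1])
    show "(\<Sum>\<rho>\<in>UNIV. y $ \<rho> * dform2 (D a b) \<rho> \<mu> \<nu> y) = 0" for \<mu> \<nu> y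
      unfolding dD by (rule radial_contraction_covariant_wedges) (rule FS, rule Z1, rule Z2)
  qed
  then show ?thesis unfolding \<omega>_def D_def by (intro ext) simp
qed

text \<open>In Fock--Schwinger gauge \<open>i\<^sub>x e\<^sup>a = x\<^sup>a\<close>, hence \<open>i\<^sub>x de\<^sup>a = euler_op 1 (e\<^sup>a - \<delta>\<^sup>a) = \<omega>\<^sup>a\<^sub>b x\<^sup>b\<close>,
  which cancels \<open>i\<^sub>x (\<omega>\<^sup>a\<^sub>b \<and> e\<^sup>b) = - \<omega>\<^sup>a\<^sub>b x\<^sup>b\<close>.\<close>

lemma radial_contraction_torsion:
  assumes S: "\<And>a b \<mu>. smooth_fn (\<omega> a b \<mu>)"
    and FS: "\<And>a b y. (\<Sum>\<mu>\<in>UNIV. y $ \<mu> * \<omega> a b \<mu> y) = 0"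
  shows "(\<Sum>\<rho>\<in>UNIV. y $ \<rho> * (dform1 (vielbein_w \<omega> c) \<rho> \<nu> y
      + (\<Sum>b\<in>UNIV. wedge11 (\<omega> c b) (vielbein_w \<omega> b) \<rho> \<nu> y))) = 0"
proof -
  define e where "e = vielbein_w \<omega>"
  have Se: "\<And>a \<mu>. smooth_fn (e a \<mu>)" unfolding e_def by (rule smooth_vielbein_w[where \<omega>=\<omega>, OF S])
  have e_dev: "e c \<nu> = (\<lambda>z. (if c = \<nu> then 1 else 0) + vielbein_w_dev \<omega> c \<nu> z)" for c \<nu>
    unfolding e_def by (rule ext) (rule vielbein_w_eq)
  have pd_e: "pd \<rho> (e c \<nu>) y = pd \<rho> (vielbein_w_dev \<omega> c \<nu>) y" for \<rho> c \<nu> y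
    unfolding e_dev
    by (subst pd_add) (simp_all add: smooth_fn_differentiable smooth_fn_const smooth_vielbein_w_dev S pd_const)
  have ec: "(\<Sum>\<rho>\<in>UNIV. z $ \<rho> * e c \<rho> z) = z $ c" for c z
    unfolding e_def by (rule radial_contraction_vielbein_w[OF S FS])
  have "pd \<nu> (\<lambda>z. \<Sum>\<rho>\<in>UNIV. z $ \<rho> * e c \<rho> z) y = (if \<nu> = c then 1 else 0)"
    unfolding ec by (rule pd_coord)
  then have de: "(\<Sum>\<rho>\<in>UNIV. y $ \<rho> * pd \<nu> (e c \<rho>) y) = - vielbein_w_dev \<omega> c \<nu> y"
    unfolding pd_radial_contraction[where w="e c", OF Se] using e_dev[of c \<nu>] by (cases "c = \<nu>") auto
  have "(\<Sum>\<rho>\<in>UNIV. y $ \<rho> * pd \<rho> (e c \<nu>) y) = (\<Sum>b\<in>UNIV. \<omega> c b \<nu> y * y $ b) - vielbein_w_dev \<omega> c \<nu> y"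
    using euler_op_vielbein_w_dev[where \<omega>=\<omega>, OF S, of c \<nu> y] by (simp add: pd_e euler_op_def)
  moreover have "(\<Sum>\<rho>\<in>UNIV. y $ \<rho> * (\<Sum>b\<in>UNIV. wedge11 (\<omega> c b) (e b) \<rho> \<nu> y)) =
      - (\<Sum>b\<in>UNIV. \<omega> c b \<nu> y * y $ b)"
    unfolding sum_mult_sum_swap radial_contraction_wedge11 by (simp add: FS ec sum_negf)
  ultimately show ?thesis
    unfolding e_def[symmetric]
    by (simp add: dform1_def distrib_left right_diff_distrib sum.distrib sum_subtractf de)
qed

lemma torsion_free_conn_of:
  assumes SR: "\<And>a b \<mu> \<nu>. smooth_fn (R a b \<mu> \<nu>)"
    and ASmn: "\<And>a b \<mu> \<nu> x. R a b \<mu> \<nu> x = - R a b \<nu> \<mu> x"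
    and B1R: "\<And>a \<mu> \<nu> \<rho> x. (\<Sum>b\<in>UNIV. wedge21 (R a b) (vielbein_R R b) \<mu> \<nu> \<rho> x) = 0"
    and CR: "curv (conn_of R) = R"
  shows "dform1 (vielbein_w (conn_of R) a) \<mu> \<nu> x
    + (\<Sum>b\<in>UNIV. wedge11 (conn_of R a b) (vielbein_w (conn_of R) b) \<mu> \<nu> x) = 0"
proof -
  define \<omega> where "\<omega> = conn_of R"
  have S: "\<And>a b \<mu>. smooth_fn (\<omega> a b \<mu>)"
    unfolding \<omega>_def by (rule smooth_conn_of[where R=R, OF SR])
  have FS: "\<And>a b y. (\<Sum>\<mu>\<in>UNIV. y $ \<mu> * \<omega> a b \<mu> y) = 0"
    unfolding \<omega>_def by (rule radial_contraction_conn_of[where R=R, OF SR ASmn])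
  define e where "e = vielbein_w \<omega>"
  have Se: "\<And>a \<mu>. smooth_fn (e a \<mu>)" unfolding e_def by (rule smooth_vielbein_w[where \<omega>=\<omega>, OF S])
  define T where "T = (\<lambda>c \<alpha> \<beta> y. dform1 (e c) \<alpha> \<beta> y + (\<Sum>b\<in>UNIV. wedge11 (\<omega> c b) (e b) \<alpha> \<beta> y))"
  have ST: "\<And>c \<alpha> \<beta>. smooth_fn (T c \<alpha> \<beta>)"
    unfolding T_def by (intro smooth_fn_add smooth_dform1 smooth_fn_sum smooth_wedge11 S Se finite)
  have AT: "\<And>c \<alpha> \<beta> y. T c \<alpha> \<beta> y = - T c \<beta> \<alpha> y"
    by (simp add: T_def dform1_def wedge11_def sum_subtractf sum_negf)
  have ZT1: "(\<Sum>\<rho>\<in>UNIV. y $ \<rho> * T c \<rho> \<nu> y) = 0" for c \<nu> y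
    unfolding T_def e_def by (rule radial_contraction_torsion[OF S FS])
  have ZT2: "(\<Sum>\<rho>\<in>UNIV. y $ \<rho> * T c \<nu> \<rho> y) = 0" for c \<nu> y
    by (rule radial_contraction_antisym[OF AT ZT1])
  have dT: "dform2 (T c) \<rho> \<mu> \<nu> y = - (\<Sum>b\<in>UNIV. wedge12 (\<omega> c b) (T b) \<rho> \<mu> \<nu> y)" for c \<rho> \<mu> \<nu> y
  proof -
    have "vielbein_R R = e"
      unfolding e_def \<omega>_def by (rule vielbein_R_eq_vielbein_w_conn_of[where R=R, OF SR])
    moreover have "curv \<omega> = R" unfolding \<omega>_def by (rule CR)
    ultimately show ?thesis
      using torsion_bianchi[where \<omega>=\<omega> and e=e, OF S Se, of c \<rho> \<mu> \<nu> y] B1R[of c \<rho> \<mu> \<nu> y]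
      unfolding T_def by simp
  qed
  have "T a \<mu> \<nu> x = 0"
  proof (rule radial_two_form_eq_0[OF ST AT ZT1])
    fix \<mu> \<nu> y
    have "(\<Sum>\<rho>\<in>UNIV. y $ \<rho> * dform2 (T a) \<rho> \<mu> \<nu> y) =
        - (\<Sum>b\<in>UNIV. \<Sum>\<rho>\<in>UNIV. y $ \<rho> * wedge12 (\<omega> a b) (T b) \<rho> \<mu> \<nu> y)"
      unfolding dT mult_minus_right sum_negf sum_mult_sum_swap ..
    also have "\<dots> = 0"
    proof -
      have "(\<Sum>\<rho>\<in>UNIV. y $ \<rho> * wedge12 (\<omega> a b) (T b) \<rho> \<mu> \<nu> y) = 0" for b
        by (rule radial_contraction_wedge12) (rule FS, rule ZT1, rule ZT2)
      then show ?thesis by simp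
    qed
    finally show "(\<Sum>\<rho>\<in>UNIV. y $ \<rho> * dform2 (T a) \<rho> \<mu> \<nu> y) = 0" .
  qed
  then show ?thesis unfolding T_def e_def \<omega>_def .
qed

lemma conn_of_mem_conn_space:
  assumes "R \<in> curv_space"
  shows "conn_of R \<in> conn_space"
proof -
  note SR = curv_spaceD(1)[OF assms] and ASab = curv_spaceD(2)[OF assms]
    and ASmn = curv_spaceD(3)[OF assms] and B1R = curv_spaceD(4)[OF assms]
    and B2R = curv_spaceD(5)[OF assms]
  have CR: "curv (conn_of R) = R" by (rule curv_conn_of[where R=R, OF SR ASmn B2R])
  show ?thesis
    unfolding conn_space_def mem_Collect_eq
    by (intro conjI allI smooth_conn_of[where R=R, OF SR] conn_of_antisym[where R=R, OF ASab]
        radial_contraction_conn_of[where R=R, OF SR ASmn] torsion_free_conn_of[where R=R, OF SR ASmn B1R CR])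
qed

theorem theorem1:
  shows "bij_betw (curv :: 'n::finite connection \<Rightarrow> 'n curvature) conn_space curv_space \<and>
         (\<forall>\<omega>\<in>(conn_space :: 'n connection set). curv \<omega> \<in> curv_space \<and> conn_of (curv \<omega>) = \<omega>) \<and>
         (\<forall>R\<in>(curv_space :: 'n curvature set). conn_of R \<in> conn_space \<and> curv (conn_of R) = R)"
proof -
  have A: "\<forall>\<omega>\<in>(conn_space :: 'n connection set). curv \<omega> \<in> curv_space \<and> conn_of (curv \<omega>) = \<omega>"
    using curv_mem_curv_space conn_of_curv conn_spaceD(1,3) by blast
  have B: "\<forall>R\<in>(curv_space :: 'n curvature set). conn_of R \<in> conn_space \<and> curv (conn_of R) = R"
    using conn_of_mem_conn_space curv_conn_of curv_spaceD(1,3,5) by blast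
  have "bij_betw (curv :: 'n connection \<Rightarrow> 'n curvature) conn_space curv_space"
    by (rule bij_betw_byWitness[where f'=conn_of]) (use A B in auto)
  then show ?thesis using A B by blast
qed

end
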